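(* Assume (A3), (A4), let $p\in(0,2)$ and $q\in(0,1]$ with $q+1<p$, and let $x$ be a trajectory solution of (MTRIGS) with initial data $(x_0,v_0)$. Then for every $r\in[q,\frac{q+1}2]$, $$\int_{t_0}^{+\infty}s^{2r-q}\|\dot x(s)\|^2\,ds<+\infty .$$
   Context: $\mathcal H$ real Hilbert space; $f_1,\dots,f_m:\mathcal H\to\mathbb R$ convex, continuously differentiable with Lipschitz continuous gradients; $F=(f_1,\dots,f_m)^\top$. Weak Pareto optimal: no $x$ with $f_i(x)<f_i(x^* )$ for all $i$; $\mathcal P_w$ the set of such points. $\mathcal L(F,b):=\{x:f_i(x)\le b_i\ \forall i\}$, $\mathcal{LP}_w(F,b):=\mathcal L(F,b)\cap\mathcal P_w$. Parameters $t_0>0$, $\alpha,\beta>0$, $q\in(0,1]$, $p\in(0,2]$, initial data $x_0,v_0\in\mathcal H$; $C(x):=\operatorname{conv}\{\nabla f_i(x)\}$. A trajectory solution of (MTRIGS) is $x:[t_0,\infty)\to\mathcal H$, continuously differentiable, with $\dot x$ absolutely continuous on each $[t_0,T]$ and a.e. derivative $\ddot x$ (Bochner measurable, $\dot x(t)=\dot x(t_0)+\int_{t_0}^t\ddot x$), satisfying $\frac{\alpha}{t^q}\dot x(t)+\operatorname{proj}_{C(x(t))+\frac{\beta}{t^p}x(t)+\ddot x(t)}(0)=0$ for a.e. $t\ge t_0$, $x(t_0)=x_0$, $\dot x(t_0)=v_0$. (A3): with $a_i:=\frac{\beta}{2t_0^p}\|x_0\|^2+\frac12\|v_0\|^2$,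 for every $x\in\mathcal L(F,F(x_0)+a)$, $\mathcal{LP}_w(F,F(x))\ne\emptyset$, and $R:=\sup_{F^*\in F(\mathcal{LP}_w(F,F(x_0)+a))}\inf_{z\in F^{-1}(\{F^*\})}\|z\|<\infty$. (A4): $S(w):=\operatorname{argmin}_z\max_i(f_i(z)-w_i)\neq\emptyset$ for all $w\in\mathbb R^m$ and $w\mapsto\operatorname{proj}_{S(w)}(0)$ is continuous. *)

theory Defs
  imports "HOL-Analysis.Analysis"
begin

definition hproj :: "'a::real_inner set \<Rightarrow> 'a \<Rightarrow> 'a" where
  "hproj S y = (SOME z. z \<in> S \<and> (\<forall>w\<in>S. dist y z \<le> dist y w))"

definition Fvec :: "('m::finite \<Rightarrow> 'a \<Rightarrow> real) \<Rightarrow> 'a \<Rightarrow> real^'m" where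
  "Fvec f x = (\<chi> i. f i x)"

definition levelset :: "('m::finite \<Rightarrow> 'a \<Rightarrow> real) \<Rightarrow> real^'m \<Rightarrow> 'a set" where
  "levelset f b = {x. \<forall>i. f i x \<le> b $ i}"

definition weak_pareto :: "('m::finite \<Rightarrow> 'a \<Rightarrow> real) \<Rightarrow> 'a set" where
  "weak_pareto f = {xs. \<not> (\<exists>x. \<forall>i. f i x < f i xs)}"

definition LPw :: "('m::finite \<Rightarrow> 'a \<Rightarrow> real) \<Rightarrow> real^'m \<Rightarrow> 'a set" where
  "LPw f b = levelset f b \<inter> weak_pareto f"

definition Sset :: "('m::finite \<Rightarrow> 'a \<Rightarrow> real) \<Rightarrow> real^'m \<Rightarrow> 'a set" where
  "Sset f w = {z. \<forall>y. (MAX i. f i z - w $ i) \<le> (MAX i. f i y - w $ i)}"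

definition Cset :: "('m::finite \<Rightarrow> 'a \<Rightarrow> 'a) \<Rightarrow> 'a::real_vector \<Rightarrow> 'a set" where
  "Cset df x = convex hull (range (\<lambda>i. df i x))"

end

theory Submission
  imports Defs "HOL-Real_Asymp.Real_Asymp"
begin

(*
  Along the trajectory the energy
    W = integral of max_i <x', grad f_i(x)> + |x'|^2/2 + beta t^-p |x|^2/2
  is nonincreasing, its derivative being -alpha t^-q |x'|^2 + (d/dt beta t^-p) |x|^2/2.  With (A3)
  this bounds every f_i(x(t)) from below, so W and the gaps f_i(x) - integral of max_i <x', grad f_i(x)>
  have finite infima W_inf and P_i, and (A4) yields an anchor z with f_i(z) <= W_inf + P_i.  The
  Lyapunov function
    E(t) = t^(q+1) (W - W_inf) + (q+1) t^q <x - z, x'> + nu(t) |x - z|^2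
  satisfies E(T) - E(T1) <= C - alpha/2 * integral of t |x'|^2 for large T1 (here q + 1 < p is used)
  and E(t) >= -c t^(2q) |x'|^2.  So I(T) = integral over [T1, T] of t |x'|^2 obeys
  alpha/2 * I <= A + c T^(2q-1) I', while the energy decay gives I(T) = O(T^(1+q)); an unbounded I
  would grow like exp(c' T^(2-2q)), hence I is bounded, and 2r - q <= 1 gives the claim.
  As x'' is only an integrable density, the identities for |x'|^2 and <x - z, x'> are obtained from
  Riemann-sum estimates rather than from pointwise derivatives.
*)

section \<open>Real analysis on intervals\<close>

lemma increment_le_if_locally_le:
  fixes H G :: "real \<Rightarrow> real"
  assumes "a \<le> b" "d > 0"
    and local: "\<And>s t. a \<le> s \<Longrightarrow> s \<le> t \<Longrightarrow> t \<le> b \<Longrightarrow> t - s < d \<Longrightarrow> H t - H s \<le> G t - G s"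
  shows "H b - H a \<le> G b - G a"
proof -
  obtain n :: nat where n: "(b - a) / d < n" using reals_Archimedean2 by blast
  have n_pos: "real n > 0" using n assms(1,2) by (smt (verit) divide_nonneg_pos)
  define P where "P k = a + real k * (b - a) / real n" for k
  have step_small: "(b - a) / n < d" using n n_pos assms(2) by (simp add: divide_less_eq mult.commute)
  have P_ge: "a \<le> P k" for k using assms(1) n_pos by (simp add: P_def)
  have P_Suc: "P (Suc k) = P k + (b - a) / n" for k by (simp add: P_def add_divide_distrib distrib_right)
  have P_le: "P k \<le> b" if "k \<le> n" for k
  proof -
    have "real k * (b - a) \<le> real n * (b - a)" using that assms(1) by (intro mult_right_mono) auto
    hence "real k * (b - a) / n \<le> b - a" using n_pos by (simp add: pos_divide_le_eq mult.commute)
    thus ?thesis by (simp add: P_def)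
  qed
  have "H (P k) - H a \<le> G (P k) - G a" if "k \<le> n" for k
    using that
  proof (induction k)
    case (Suc k)
    have "H (P (Suc k)) - H (P k) \<le> G (P (Suc k)) - G (P k)"
      using local P_ge[of k] P_le[of "Suc k"] Suc.prems P_Suc[of k] step_small assms(1) n_pos
      by (auto simp: divide_nonneg_pos)
    with Suc show ?case by simp
  qed (simp add: P_def)
  moreover have "P n = b" using n_pos by (simp add: P_def)
  ultimately show ?thesis by fastforce
qed

text \<open>A Riemann-sum substitute for the mean value theorem, needed because the
  functions it is applied to are only known to be absolutely continuous.\<close>
lemma le_if_increments_locally_dominated:
  fixes H G :: "real \<Rightarrow> real"
  assumes "a \<le> b" and G_mono: "G a \<le> G b"
    and local: "\<And>e. e > 0 \<Longrightarrow> \<exists>d>0. \<forall>s t. a \<le> s \<longrightarrow> s \<le> t \<longrightarrow> t \<le> b \<longrightarrow> t - s < d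
                 \<longrightarrow> H t - H s \<le> e * (G t - G s)"
  shows "H b \<le> H a"
proof (rule ccontr)
  assume "\<not> H b \<le> H a"
  define e where "e = (H b - H a) / (2 * (G b - G a + 1))"
  have e_pos: "e > 0" using \<open>\<not> H b \<le> H a\<close> G_mono by (simp add: e_def)
  obtain d where "d > 0" and d: "\<forall>s t. a \<le> s \<longrightarrow> s \<le> t \<longrightarrow> t \<le> b \<longrightarrow> t - s < d
      \<longrightarrow> H t - H s \<le> e * G t - e * G s"
    using local[OF e_pos] by (auto simp: right_diff_distrib)
  have "H b - H a \<le> e * G b - e * G a"
    by (rule increment_le_if_locally_le[OF \<open>a \<le> b\<close> \<open>d > 0\<close>]) (use d in blast)
  also have "\<dots> = (H b - H a) * ((G b - G a) / (2 * (G b - G a + 1)))"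
    unfolding right_diff_distrib[symmetric] e_def by simp
  also have "\<dots> < (H b - H a) * 1"
    using \<open>\<not> H b \<le> H a\<close> G_mono by (intro mult_strict_left_mono) (auto simp: divide_less_eq)
  finally show False by simp
qed

lemma eq_if_increments_locally_dominated:
  fixes H G :: "real \<Rightarrow> real"
  assumes "a \<le> b" and "G a \<le> G b"
    and local: "\<And>e. e > 0 \<Longrightarrow> \<exists>d>0. \<forall>s t. a \<le> s \<longrightarrow> s \<le> t \<longrightarrow> t \<le> b \<longrightarrow> t - s < d
                 \<longrightarrow> \<bar>H t - H s\<bar> \<le> e * (G t - G s)"
  shows "H b = H a"
proof -
  have "H b \<le> H a" "- H b \<le> - H a"
    by (rule le_if_increments_locally_dominated[OF assms(1,2)]; use local in \<open>force\<close>)+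
  thus ?thesis by simp
qed

lemma fundamental_theorem_of_calculus_subinterval:
  fixes f :: "real \<Rightarrow> 'a::banach"
  assumes "a \<le> s" "s \<le> t" "t \<le> b"
    and "\<And>x. x \<in> {a..b} \<Longrightarrow> (f has_vector_derivative f' x) (at x within {a..b})"
  shows "(f' has_integral (f t - f s)) {s..t}"
proof (rule fundamental_theorem_of_calculus)
  fix x assume "x \<in> {s..t}"
  with assms(1-3) show "(f has_vector_derivative f' x) (at x within {s..t})"
    by (intro has_vector_derivative_within_subset[OF assms(4)]) auto
qed fact

lemma integral_diff_initial_segments:
  fixes f :: "real \<Rightarrow> 'a::banach"
  assumes "f integrable_on {a..b}" "a \<le> s" "s \<le> t" "t \<le> b"
  shows "integral {a..t} f - integral {a..s} f = integral {s..t} f"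
proof -
  have "f integrable_on {a..t}" using assms by (intro integrable_subinterval_real[OF assms(1)]) auto
  from Henstock_Kurzweil_Integration.integral_combine[OF assms(2,3) this] show ?thesis by (simp add: algebra_simps)
qed

lemma integral_le_off_negligible:
  fixes f g :: "real \<Rightarrow> real"
  assumes "f integrable_on S" "g integrable_on S" "negligible N" "\<And>x. x \<in> S - N \<Longrightarrow> f x \<le> g x"
  shows "integral S f \<le> integral S g"
proof -
  define g' where "g' x = (if x \<in> N then max (f x) (g x) else g x)" for x
  have "integral S g' = integral S g"
    by (rule integral_spike[OF assms(3)]) (simp add: g'_def)
  moreover have "g' integrable_on S"
    by (rule integrable_spike[OF assms(2,3)]) (simp add: g'_def)
  then have "integral S f \<le> integral S g'"
    by (rule integral_le[OF assms(1)]) (use assms(4) in \<open>auto simp: g'_def\<close>)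
  ultimately show ?thesis by simp
qed

lemma le_if_nonneg_vector_derivative:
  fixes F F' :: "real \<Rightarrow> real"
  assumes "a \<le> s" "s \<le> t" "t \<le> b"
    and "\<And>x. x \<in> {a..b} \<Longrightarrow> (F has_vector_derivative F' x) (at x within {a..b})"
    and "\<And>x. x \<in> {a..b} \<Longrightarrow> F' x \<ge> 0"
  shows "F s \<le> F t"
proof -
  have "(F' has_integral (F t - F s)) {s..t}"
    by (rule fundamental_theorem_of_calculus_subinterval[OF assms(1-4)])
  then have "F t - F s \<ge> 0" by (rule has_integral_nonneg) (use assms in auto)
  thus ?thesis by simp
qed

lemma continuous_on_Max_image:
  fixes F :: "'i \<Rightarrow> 'b::topological_space \<Rightarrow> 'c::linorder_topology"
  assumes "finite I" "I \<noteq> {}" "\<And>i. i \<in> I \<Longrightarrow> continuous_on S (F i)"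
  shows "continuous_on S (\<lambda>t. Max ((\<lambda>i. F i t) ` I))"
  using assms
proof (induction I rule: finite_ne_induct)
  case (insert x I)
  have "continuous_on S (\<lambda>t. max (F x t) (Max ((\<lambda>i. F i t) ` I)))"
    using insert by (intro continuous_on_max) auto
  thus ?case using insert by simp
qed simp

lemma continuous_on_Min_image:
  fixes F :: "'i \<Rightarrow> 'b::topological_space \<Rightarrow> 'c::linorder_topology"
  assumes "finite I" "I \<noteq> {}" "\<And>i. i \<in> I \<Longrightarrow> continuous_on S (F i)"
  shows "continuous_on S (\<lambda>t. Min ((\<lambda>i. F i t) ` I))"
  using assms
proof (induction I rule: finite_ne_induct)
  case (insert x I)
  have "continuous_on S (\<lambda>t. min (F x t) (Min ((\<lambda>i. F i t) ` I)))"
    using insert by (intro continuous_on_min) auto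
  thus ?case using insert by simp
qed simp

lemma integrable_on_Ici_if_nonneg_bounded:
  fixes h :: "real \<Rightarrow> real"
  assumes int: "\<And>y. y \<ge> a \<Longrightarrow> h integrable_on {a..y}"
    and nonneg: "\<And>y. y \<ge> a \<Longrightarrow> h y \<ge> 0"
    and bound: "\<And>y. y \<ge> a \<Longrightarrow> integral {a..y} h \<le> B"
  shows "h integrable_on {a..}"
proof -
  define f where "f n x = (if x \<in> {a..real n} then h x else 0)" for n x
  have f_integral: "(f n has_integral (integral {a..real n} h)) {a..}" for n
  proof (cases "real n \<ge> a")
    case True
    then show ?thesis unfolding f_def
      by (metis (no_types, lifting) ext Icc_subset_Ici_iff order.refl
        has_integral_restrict int integrable_integral)
  next
    case False
    then have "f n = (\<lambda>x. 0)" by (auto simp: f_def)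
    with False show ?thesis by simp
  qed
  have "h integrable_on {a..} \<and> (\<lambda>n. integral {a..} (f n)) \<longlonglongrightarrow> integral {a..} h"
  proof (intro monotone_convergence_increasing allI ballI)
    show "f n integrable_on {a..}" for n using f_integral by blast
    show "f n x \<le> f (Suc n) x" if "x \<in> {a..}" for n x using that nonneg by (auto simp: f_def)
    show "(\<lambda>n. f n x) \<longlonglongrightarrow> h x" if "x \<in> {a..}" for x
    proof -
      have "eventually (\<lambda>n. real n \<ge> x) sequentially"
        by (meson eventually_sequentiallyI nat_ceiling_le_eq)
      with that have "eventually (\<lambda>n. f n x = h x) sequentially"
        by (simp add: eventually_mono f_def)
      thus ?thesis by (simp add: tendsto_eventually)
    qed
    have "norm (integral {a..} (f n)) \<le> max B 0" for n
    proof (cases "real n \<ge> a")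
      case True
      have "integral {a..real n} h \<ge> 0"
        using True int nonneg by (intro integral_nonneg) auto
      then show ?thesis using f_integral[of n] bound[OF True] by (simp add: integral_unique)
    next
      case False
      then show ?thesis using f_integral[of n] by (simp add: integral_unique)
    qed
    then show "bounded (range (\<lambda>n. integral {a..} (f n)))"
      by (metis (no_types, lifting) boundedI rangeE)
  qed
  then show ?thesis by blast
qed

lemma mult_antimono_increment_local:
  fixes k k' D :: "real \<Rightarrow> real"
  assumes "s \<le> t" and k': "(k' has_integral (k t - k s)) {s..t}"
    and kD_int: "(\<lambda>\<tau>. k' \<tau> * D \<tau>) integrable_on {s..t}"
    and "k t \<ge> 0" "D t \<le> D s"
    and small: "\<And>\<tau>. \<tau> \<in> {s..t} \<Longrightarrow> k' \<tau> * (D s - D \<tau>) \<le> e"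
  shows "k t * D t - k s * D s - integral {s..t} (\<lambda>\<tau>. k' \<tau> * D \<tau>) \<le> e * (t - s)"
proof -
  have k'D_int: "((\<lambda>\<tau>. k' \<tau> * D s) has_integral ((k t - k s) * D s)) {s..t}"
    using has_integral_mult_left[OF k'] by simp
  have diff: "((\<lambda>\<tau>. k' \<tau> * (D s - D \<tau>)) has_integral
      ((k t - k s) * D s - integral {s..t} (\<lambda>\<tau>. k' \<tau> * D \<tau>))) {s..t}"
    using has_integral_diff[OF k'D_int integrable_integral[OF kD_int]]
    by (simp add: right_diff_distrib)
  have "(k t - k s) * D s - integral {s..t} (\<lambda>\<tau>. k' \<tau> * D \<tau>) \<le> e * (t - s)"
    using has_integral_le[OF diff has_integral_const_real[of e s t]] small \<open>s \<le> t\<close> by (auto simp: mult.commute)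
  moreover have "k t * (D t - D s) \<le> 0" using assms(4,5) by (simp add: mult_nonneg_nonpos)
  ultimately show ?thesis by (simp add: algebra_simps)
qed

text \<open>Integration by parts against a nonincreasing continuous factor, which need not be differentiable.\<close>
lemma mult_antimono_increment_le_integral:
  fixes k k' D :: "real \<Rightarrow> real"
  assumes "a \<le> b"
    and k: "\<And>t. t \<in> {a..b} \<Longrightarrow> (k has_vector_derivative k' t) (at t within {a..b})"
    and k'_cont: "continuous_on {a..b} k'"
    and k_nonneg: "\<And>t. t \<in> {a..b} \<Longrightarrow> k t \<ge> 0"
    and D_cont: "continuous_on {a..b} D"
    and D_antimono: "\<And>s t. a \<le> s \<Longrightarrow> s \<le> t \<Longrightarrow> t \<le> b \<Longrightarrow> D t \<le> D s"
  shows "k b * D b - k a * D a \<le> integral {a..b} (\<lambda>t. k' t * D t)"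
proof -
  define H where "H t = k t * D t - integral {a..t} (\<lambda>\<tau>. k' \<tau> * D \<tau>)" for t
  have kD_int: "(\<lambda>t. k' t * D t) integrable_on {a..b}"
    by (intro integrable_continuous_interval continuous_intros k'_cont D_cont)
  obtain B where B: "\<And>t. t \<in> {a..b} \<Longrightarrow> \<bar>k' t\<bar> \<le> B"
    using compact_imp_bounded[OF compact_continuous_image[OF k'_cont compact_Icc]]
    unfolding bounded_iff by fastforce
  have "B \<ge> 0" using B[of a] \<open>a \<le> b\<close> by auto
  have "H b \<le> H a"
  proof (rule le_if_increments_locally_dominated[OF \<open>a \<le> b\<close>, of "\<lambda>t. t"])
    fix e :: real assume "e > 0"
    obtain d where "d > 0" and d: "\<And>x y. x \<in> {a..b} \<Longrightarrow> y \<in> {a..b} \<Longrightarrow> dist y x < d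
        \<Longrightarrow> dist (D y) (D x) < e / (B + 1)"
      using compact_uniformly_continuous[OF D_cont compact_Icc,
          unfolded uniformly_continuous_on_def, rule_format, of "e / (B + 1)"] \<open>e > 0\<close> \<open>B \<ge> 0\<close>
      by auto
    show "\<exists>d>0. \<forall>s t. a \<le> s \<longrightarrow> s \<le> t \<longrightarrow> t \<le> b \<longrightarrow> t - s < d \<longrightarrow> H t - H s \<le> e * (t - s)"
    proof (intro exI[of _ d] conjI allI impI \<open>d > 0\<close>)
      fix s t assume st: "a \<le> s" "s \<le> t" "t \<le> b" "t - s < d"
      have "H t - H s = k t * D t - k s * D s - integral {s..t} (\<lambda>\<tau>. k' \<tau> * D \<tau>)"
        using integral_diff_initial_segments[OF kD_int st(1-3)] by (simp add: H_def)
      also have "\<dots> \<le> e * (t - s)"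
      proof (rule mult_antimono_increment_local[OF st(2)])
        show "(k' has_integral (k t - k s)) {s..t}"
          by (rule fundamental_theorem_of_calculus_subinterval[OF st(1-3) k])
        show "(\<lambda>\<tau>. k' \<tau> * D \<tau>) integrable_on {s..t}"
          by (rule integrable_subinterval_real[OF kD_int]) (use st in auto)
        show "k t \<ge> 0" "D t \<le> D s" using st k_nonneg D_antimono by auto
        fix \<tau> assume \<tau>: "\<tau> \<in> {s..t}"
        have "\<bar>D s - D \<tau>\<bar> \<le> e / (B + 1)"
          using d[of s \<tau>] st \<tau> by (auto simp: dist_real_def)
        then have "\<bar>k' \<tau>\<bar> * \<bar>D s - D \<tau>\<bar> \<le> B * (e / (B + 1))"
          using B[of \<tau>] \<tau> st by (intro mult_mono) auto
        also have "\<dots> \<le> e" using \<open>e > 0\<close> \<open>B \<ge> 0\<close> by (simp add: field_simps)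
        finally show "k' \<tau> * (D s - D \<tau>) \<le> e"
          by (metis abs_ge_self abs_mult order_trans)
      qed
      finally show "H t - H s \<le> e * (t - s)" .
    qed
  qed (use \<open>a \<le> b\<close> in auto)
  then show ?thesis by (simp add: H_def)
qed

lemma integral_powr_le:
  fixes e a b :: real
  assumes e: "e < -1" and "0 < a" "a \<le> b"
  shows "(\<lambda>t. t powr e) integrable_on {a..b}"
    and "integral {a..b} (\<lambda>t. t powr e) \<le> a powr (e + 1) / - (e + 1)"
proof -
  have "((\<lambda>t. t powr (e + 1) / (e + 1)) has_vector_derivative t powr e) (at t within {a..b})"
    if "t \<in> {a..b}" for t
  proof -
    have "((\<lambda>t. t powr (e + 1) / (e + 1)) has_real_derivative (e + 1) * t powr (e + 1 - 1) / (e + 1))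
        (at t within {a..b})"
      using that assms by (intro DERIV_cdivide has_field_derivative_at_within[OF has_real_derivative_powr]) auto
    then show ?thesis using e by (simp add: has_real_derivative_iff_has_vector_derivative)
  qed
  then have int: "((\<lambda>t. t powr e) has_integral (b powr (e + 1) / (e + 1) - a powr (e + 1) / (e + 1))) {a..b}"
    by (intro fundamental_theorem_of_calculus \<open>a \<le> b\<close>)
  then show "(\<lambda>t. t powr e) integrable_on {a..b}" by blast
  have "b powr (e + 1) / (e + 1) \<le> 0" using e by (simp add: divide_nonneg_neg)
  then show "integral {a..b} (\<lambda>t. t powr e) \<le> a powr (e + 1) / - (e + 1)"
    unfolding minus_divide_right[symmetric] using integral_unique[OF int] by argo
qed

lemma integral_mono_upper_limit:
  fixes \<phi> :: "real \<Rightarrow> real"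
  assumes "\<phi> integrable_on {a..t}" "a \<le> s" "s \<le> t" and nonneg: "\<And>r. r \<in> {s..t} \<Longrightarrow> \<phi> r \<ge> 0"
  shows "integral {a..s} \<phi> \<le> integral {a..t} \<phi>"
proof -
  have "integral {s..t} \<phi> \<ge> 0"
    using nonneg by (intro integral_nonneg integrable_subinterval_real[OF assms(1)]) (use assms in auto)
  then show ?thesis using integral_diff_initial_segments[OF assms(1,2,3) order_refl] by simp
qed

lemma ln_integral_growth:
  fixes \<phi> :: "real \<Rightarrow> real"
  assumes "0 < a" "q < 1" "a \<le> b" "b \<le> T"
    and \<phi>_cont: "continuous_on {a..} \<phi>" and \<phi>_nonneg: "\<And>t. t \<ge> a \<Longrightarrow> \<phi> t \<ge> 0"
    and pos: "integral {a..b} \<phi> > 0"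
    and \<phi>_ge: "\<And>t. t \<ge> b \<Longrightarrow> k * t powr (1 - 2*q) * integral {a..t} \<phi> \<le> \<phi> t"
  shows "ln (integral {a..b} \<phi>) - k * b powr (2 - 2*q) / (2 - 2*q)
           \<le> ln (integral {a..T} \<phi>) - k * T powr (2 - 2*q) / (2 - 2*q)"
proof -
  define I where "I t = integral {a..t} \<phi>" for t
  have "ln (I b) - k * b powr (2 - 2*q) / (2 - 2*q) \<le> ln (I T) - k * T powr (2 - 2*q) / (2 - 2*q)"
  proof (rule le_if_nonneg_vector_derivative[OF order_refl \<open>b \<le> T\<close> order_refl])
    fix t assume t: "t \<in> {b..T}"
    have "t > 0" using t assms by auto
    have "I b \<le> I t" unfolding I_def
      using t assms by (intro integral_mono_upper_limit integrable_continuous_interval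
          continuous_on_subset[OF \<phi>_cont]) auto
    then have "I t > 0" using pos by (simp add: I_def)
    have "(I has_vector_derivative \<phi> t) (at t within {a..T})"
      unfolding I_def[abs_def] using t assms
      by (intro integral_has_vector_derivative continuous_on_subset[OF \<phi>_cont]) auto
    then have "(I has_real_derivative \<phi> t) (at t within {b..T})"
      using \<open>a \<le> b\<close> by (auto simp: has_real_derivative_iff_has_vector_derivative
          intro: has_vector_derivative_within_subset)
    then have "((\<lambda>t. ln (I t)) has_real_derivative inverse (I t) * \<phi> t) (at t within {b..T})"
      by (rule DERIV_chain2[where g = I and x = t, OF DERIV_ln[OF \<open>I t > 0\<close>]])
    then have "((\<lambda>t. ln (I t) - k * t powr (2 - 2*q) / (2 - 2*q)) has_real_derivative
        inverse (I t) * \<phi> t - k * ((2 - 2*q) * t powr (2 - 2*q - 1)) / (2 - 2*q)) (at t within {b..T})"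
      using \<open>t > 0\<close>
      by (intro DERIV_diff DERIV_cdivide DERIV_cmult has_field_derivative_at_within[OF has_real_derivative_powr])
    moreover have "k * ((2 - 2*q) * t powr (2 - 2*q - 1)) / (2 - 2*q) = k * t powr (1 - 2*q)"
      using \<open>q < 1\<close> by simp
    ultimately show "((\<lambda>t. ln (I t) - k * t powr (2 - 2*q) / (2 - 2*q)) has_vector_derivative
        \<phi> t / I t - k * t powr (1 - 2*q)) (at t within {b..T})"
      by (simp add: has_real_derivative_iff_has_vector_derivative field_simps)
    show "\<phi> t / I t - k * t powr (1 - 2*q) \<ge> 0"
      using \<phi>_ge[of t] t \<open>I t > 0\<close> by (simp add: I_def le_divide_eq)
  qed
  then show ?thesis by (simp add: I_def)
qed

lemma mult_powr_le_rearrange: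
  fixes T K c I \<phi> :: real
  assumes "T > 0" "K > 0" "c / 2 * I \<le> K * T powr (2*q - 1) * \<phi>"
  shows "c / (2 * K) * T powr (1 - 2*q) * I \<le> \<phi>"
proof -
  have "(c / 2 * I) * T powr (1 - 2*q) / K \<le> (K * T powr (2*q - 1) * \<phi>) * T powr (1 - 2*q) / K"
    using assms by (intro divide_right_mono mult_right_mono) auto
  also have "\<dots> = \<phi> * (T powr (2*q - 1) * T powr (1 - 2*q))" using \<open>K > 0\<close> by simp
  also have "\<dots> = \<phi>" using \<open>T > 0\<close> by (simp add: powr_add[symmetric])
  finally show ?thesis by (simp add: mult_ac)
qed

text \<open>If the integral were unbounded, the feedback inequality would force it to grow like
  \<open>exp (c T\<^sup>2\<^sup>-\<^sup>2\<^sup>q)\<close>, contradicting the polynomial bound.\<close>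
lemma integral_bounded_if_feedback_inequality:
  fixes \<phi> :: "real \<Rightarrow> real"
  assumes "T1 > 0" "0 < q" "q < 1" "c > 0" "K > 0"
    and \<phi>_cont: "continuous_on {T1..} \<phi>" and \<phi>_nonneg: "\<And>t. t \<ge> T1 \<Longrightarrow> \<phi> t \<ge> 0"
    and feedback: "\<And>T. T \<ge> T1 \<Longrightarrow> c * integral {T1..T} \<phi> \<le> A + K * T powr (2*q - 1) * \<phi> T"
    and poly: "\<And>T. T \<ge> T1 \<Longrightarrow> integral {T1..T} \<phi> \<le> C * T powr (1 + q)"
  shows "\<exists>B. \<forall>T\<ge>T1. integral {T1..T} \<phi> \<le> B"
proof (rule ccontr)
  define I where "I T = integral {T1..T} \<phi>" for T
  define k where "k = c / (2 * K)"
  define G where "G T = k * T powr (2 - 2*q) / (2 - 2*q)" for T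
  assume "\<not> ?thesis"
  then have "\<forall>B. \<exists>T\<ge>T1. B < I T" by (auto simp: I_def not_le)
  then obtain T3 where T3: "T3 \<ge> T1" "I T3 > max (2 * \<bar>A\<bar> / c) 1" by blast
  have I_large: "2 * \<bar>A\<bar> / c < I T \<and> 1 < I T" if "T \<ge> T3" for T
    using integral_mono_upper_limit[of \<phi> T1 T T3] T3 that \<phi>_nonneg
      integrable_continuous_interval[OF continuous_on_subset[OF \<phi>_cont, of "{T1..T}"]]
    by (auto simp: I_def)
  have \<phi>_ge: "k * T powr (1 - 2*q) * I T \<le> \<phi> T" if "T \<ge> T3" for T
    unfolding k_def
  proof (rule mult_powr_le_rearrange)
    show "T > 0" using that T3 \<open>T1 > 0\<close> by simp
    have "\<bar>A\<bar> \<le> c / 2 * I T" using I_large[OF that] \<open>c > 0\<close> by (auto simp: divide_less_eq mult.commute)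
    then show "c / 2 * I T \<le> K * T powr (2*q - 1) * \<phi> T"
      using feedback[of T] that T3 by (simp add: I_def)
  qed fact
  have "C > 0"
  proof -
    have "0 < I T3" using I_large[of T3] by simp
    also have "\<dots> \<le> C * T3 powr (1 + q)" using poly[of T3] T3 by (simp add: I_def)
    finally show ?thesis using T3 \<open>T1 > 0\<close> by (simp add: zero_less_mult_iff)
  qed
  have "k > 0" using \<open>c > 0\<close> \<open>K > 0\<close> by (simp add: k_def)
  then have "filterlim (\<lambda>T. G T - (1 + q) * ln T) at_top at_top"
    using \<open>q < 1\<close> unfolding G_def by real_asymp
  then have "eventually (\<lambda>T. T \<ge> T3 \<and> ln C - (ln (I T3) - G T3) < G T - (1 + q) * ln T) at_top"
    unfolding filterlim_at_top_dense by (intro eventually_conj eventually_ge_at_top) blast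
  then obtain T where T: "T \<ge> T3" and large: "ln C - (ln (I T3) - G T3) < G T - (1 + q) * ln T"
    by (auto simp: eventually_at_top_linorder)
  have "ln (I T) \<le> ln (C * T powr (1 + q))"
    using poly[of T] T T3 I_large[OF T] by (subst ln_le_cancel_iff) (auto simp: I_def)
  also have "\<dots> = ln C + (1 + q) * ln T" using \<open>C > 0\<close> T T3 \<open>T1 > 0\<close> by (simp add: ln_mult)
  finally have upper: "ln (I T) \<le> ln C + (1 + q) * ln T" .
  have "ln (I T3) - G T3 \<le> ln (I T) - G T"
    unfolding I_def G_def
    by (rule ln_integral_growth[OF \<open>T1 > 0\<close> \<open>q < 1\<close> T3(1) T \<phi>_cont])
      (use \<phi>_nonneg I_large[of T3] \<phi>_ge in \<open>auto simp: I_def\<close>)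
  then show False using upper large by linarith
qed

lemma has_vector_derivative_norm_power2:
  fixes g :: "real \<Rightarrow> 'a::real_inner"
  assumes "(g has_vector_derivative v) (at t within S)"
  shows "((\<lambda>r. (norm (g r))\<^sup>2) has_vector_derivative 2 * (g t \<bullet> v)) (at t within S)"
proof -
  have "(g has_derivative (\<lambda>h. h *\<^sub>R v)) (at t within S)"
    using assms by (simp add: has_vector_derivative_def)
  from has_derivative_inner[OF this this]
  have "((\<lambda>r. g r \<bullet> g r) has_derivative (\<lambda>h. h *\<^sub>R (2 * (g t \<bullet> v)))) (at t within S)"
    by (simp add: inner_commute algebra_simps)
  then show ?thesis by (simp add: has_vector_derivative_def power2_norm_eq_inner)
qed

lemma has_vector_derivative_inner_const:
  fixes g :: "real \<Rightarrow> 'a::real_inner"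
  assumes "(g has_vector_derivative v) F"
  shows "((\<lambda>r. g r \<bullet> c) has_vector_derivative v \<bullet> c) F"
proof -
  have "(g has_derivative (\<lambda>h. h *\<^sub>R v)) F" using assms by (simp add: has_vector_derivative_def)
  from has_derivative_inner_left[OF this, of c] show ?thesis by (simp add: has_vector_derivative_def)
qed

section \<open>Convex analysis in inner product spaces\<close>

lemma hproj_zero_min_norm:
  fixes S :: "'a::real_inner set"
  assumes "compact S" "S \<noteq> {}"
  shows "hproj S 0 \<in> S" "\<And>y. y \<in> S \<Longrightarrow> norm (hproj S 0) \<le> norm y"
proof -
  have "\<exists>z\<in>S. \<forall>w\<in>S. dist 0 z \<le> dist 0 w"
    by (rule continuous_attains_inf[OF assms]) (intro continuous_intros)
  then have "\<exists>z. z \<in> S \<and> (\<forall>w\<in>S. dist 0 z \<le> dist 0 w)" by blast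
  from someI_ex[OF this] show "hproj S 0 \<in> S" "\<And>y. y \<in> S \<Longrightarrow> norm (hproj S 0) \<le> norm y"
    unfolding hproj_def by simp_all
qed

lemma min_norm_inner_nonneg:
  fixes S :: "'a::real_inner set"
  assumes "convex S" "\<xi> \<in> S" and min: "\<And>y. y \<in> S \<Longrightarrow> norm \<xi> \<le> norm y" and "y \<in> S"
  shows "\<xi> \<bullet> (y - \<xi>) \<ge> 0"
proof (rule ccontr)
  define c where "c = \<xi> \<bullet> (y - \<xi>)"
  define d where "d = (y - \<xi>) \<bullet> (y - \<xi>)"
  define s where "s = min 1 (- c / (d + 1))"
  assume "\<not> 0 \<le> \<xi> \<bullet> (y - \<xi>)"
  then have "c < 0" by (simp add: c_def)
  have "d \<ge> 0" by (simp add: d_def)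
  have "- c / (d + 1) > 0" using \<open>c < 0\<close> \<open>d \<ge> 0\<close> by (intro divide_pos_pos) auto
  then have "s > 0" "s \<le> 1" by (auto simp: s_def)
  have "\<xi> + s *\<^sub>R (y - \<xi>) = (1 - s) *\<^sub>R \<xi> + s *\<^sub>R y" by (simp add: algebra_simps)
  then have "\<xi> + s *\<^sub>R (y - \<xi>) \<in> S"
    using assms(1,2,4) \<open>s > 0\<close> \<open>s \<le> 1\<close> by (simp add: convex_def)
  then have "(norm \<xi>)\<^sup>2 \<le> (norm (\<xi> + s *\<^sub>R (y - \<xi>)))\<^sup>2" using min by simp
  also have "\<dots> = (norm \<xi>)\<^sup>2 + 2 * s * c + s\<^sup>2 * d"
    unfolding c_def d_def power2_norm_eq_inner
    by (simp add: inner_add_left inner_add_right inner_commute power2_eq_square algebra_simps)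
  finally have "0 \<le> s * (2 * c + s * d)" by (simp add: power2_eq_square algebra_simps)
  then have "0 \<le> 2 * c + s * d" using \<open>s > 0\<close> by (simp add: zero_le_mult_iff)
  moreover have "s * d \<le> (- c / (d + 1)) * d" using \<open>d \<ge> 0\<close> by (intro mult_right_mono) (auto simp: s_def)
  moreover have "(- c / (d + 1)) * d \<le> - c" using \<open>c < 0\<close> \<open>d \<ge> 0\<close> by (simp add: field_simps)
  ultimately show False using \<open>c < 0\<close> by linarith
qed

lemma hproj_zero_translate:
  fixes C :: "'a::real_inner set"
  assumes "compact C" "convex C" "C \<noteq> {}"
  obtains g where "g \<in> C" "hproj ((\<lambda>c. c + w) ` C) 0 = g + w"
    "\<And>c. c \<in> C \<Longrightarrow> (g + w) \<bullet> (c - g) \<ge> 0"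
proof -
  define S where "S = (\<lambda>c. c + w) ` C"
  have "compact S" unfolding S_def
    by (rule compact_continuous_image[OF _ assms(1)]) (intro continuous_intros)
  moreover have "S \<noteq> {}" using assms(3) by (simp add: S_def)
  ultimately have in_S: "hproj S 0 \<in> S" and min: "\<And>y. y \<in> S \<Longrightarrow> norm (hproj S 0) \<le> norm y"
    by (rule hproj_zero_min_norm)+
  have "convex S"
    using convex_translation[OF assms(2), of w] by (simp add: S_def add.commute image_def)
  obtain g where g: "g \<in> C" "hproj S 0 = g + w" using in_S by (auto simp: S_def)
  have "(g + w) \<bullet> (c - g) \<ge> 0" if "c \<in> C" for c
    using min_norm_inner_nonneg[OF \<open>convex S\<close> in_S min, of "c + w"] that g(2)
    by (simp add: S_def)
  with g show thesis by (intro that) (auto simp: S_def)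
qed

lemma inner_le_Max_if_in_convex_hull:
  fixes G :: "'m::finite \<Rightarrow> 'a::real_inner"
  assumes "g \<in> convex hull (range G)"
  shows "u \<bullet> g \<le> (MAX i. u \<bullet> G i)"
proof -
  have "convex hull (range G) \<subseteq> {y. u \<bullet> y \<le> (MAX i. u \<bullet> G i)}"
    by (rule hull_minimal) (auto simp: convex_halfspace_le)
  then show ?thesis using assms by auto
qed

lemma inner_ge_Min_if_in_convex_hull:
  fixes G :: "'m::finite \<Rightarrow> 'a::real_inner"
  assumes "g \<in> convex hull (range G)"
  shows "u \<bullet> g \<ge> (MIN i. u \<bullet> G i)"
proof -
  have "convex hull (range G) \<subseteq> {y. u \<bullet> y \<ge> (MIN i. u \<bullet> G i)}"
    by (rule hull_minimal) (auto simp: convex_halfspace_ge)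
  then show ?thesis using assms by auto
qed

lemma convex_on_gradient_inequality:
  fixes f :: "'a::real_inner \<Rightarrow> real"
  assumes convex: "convex_on UNIV f" and deriv: "(f has_derivative (\<lambda>h. d \<bullet> h)) (at x)"
  shows "f x + d \<bullet> (y - x) \<le> f y"
proof -
  define g where "g s = f (x + s *\<^sub>R (y - x))" for s :: real
  have "((\<lambda>s. x + s *\<^sub>R (y - x)) has_derivative (\<lambda>h. h *\<^sub>R (y - x))) (at 0)"
    by (auto intro!: derivative_eq_intros)
  moreover have "(f has_derivative (\<lambda>h. d \<bullet> h)) (at ((\<lambda>s. x + s *\<^sub>R (y - x)) 0))"
    using deriv by simp
  ultimately have "(g has_derivative (\<lambda>h. d \<bullet> (h *\<^sub>R (y - x)))) (at 0)"
    unfolding g_def[abs_def] by (rule has_derivative_compose)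
  moreover have "(\<lambda>h. d \<bullet> (h *\<^sub>R (y - x))) = (*) (d \<bullet> (y - x))" by (auto simp: mult.commute)
  ultimately have "(g has_field_derivative d \<bullet> (y - x)) (at 0)"
    by (simp add: has_field_derivative_def)
  then have "((\<lambda>s. (g s - g 0) / (s - 0)) \<longlongrightarrow> d \<bullet> (y - x)) (at_right 0)"
    unfolding has_field_derivative_iff by (rule tendsto_mono[rotated]) (simp add: at_le)
  moreover have "\<forall>\<^sub>F s in at_right 0. (g s - g 0) / (s - 0) \<le> f y - f x"
    unfolding eventually_at_right[OF zero_less_one]
  proof (intro exI[of _ 1] conjI allI impI)
    fix s :: real assume s: "0 < s" "s < 1"
    have "x + s *\<^sub>R (y - x) = (1 - s) *\<^sub>R x + s *\<^sub>R y" by (simp add: algebra_simps)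
    then have "g s \<le> (1 - s) * f x + s * f y"
      using convex_onD[OF convex, of s x y] s by (simp add: g_def)
    then have "g s - g 0 \<le> s * (f y - f x)" by (simp add: g_def algebra_simps)
    then show "(g s - g 0) / (s - 0) \<le> f y - f x"
      using s by (simp add: divide_le_eq mult.commute)
  qed simp
  ultimately have "d \<bullet> (y - x) \<le> f y - f x"
    by (rule tendsto_le[OF trivial_limit_at_right_real tendsto_const])
  then show ?thesis by simp
qed

section \<open>Velocities with an integrable density\<close>

lemma half_norm_power2_increment_local:
  fixes v v' :: "real \<Rightarrow> 'a::real_inner" and \<psi> :: "real \<Rightarrow> real"
  assumes "\<sigma> \<le> \<tau>" and v': "\<And>w. ((\<lambda>r. v' r \<bullet> w) has_integral ((v \<tau> - v \<sigma>) \<bullet> w)) {\<sigma>..\<tau>}"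
    and norm_int: "(\<lambda>r. norm (v' r)) integrable_on {\<sigma>..\<tau>}" and \<psi>_int: "\<psi> integrable_on {\<sigma>..\<tau>}"
    and "negligible N" and \<psi>_eq: "\<And>r. r \<in> {\<sigma>..\<tau>} - N \<Longrightarrow> \<psi> r = v' r \<bullet> v r"
    and close: "\<And>r. r \<in> {\<sigma>..\<tau>} \<Longrightarrow> norm (v \<tau> - v r) \<le> e \<and> norm (v \<sigma> - v r) \<le> e"
  shows "\<bar>(norm (v \<tau>))\<^sup>2 / 2 - (norm (v \<sigma>))\<^sup>2 / 2 - integral {\<sigma>..\<tau>} \<psi>\<bar>
           \<le> e * integral {\<sigma>..\<tau>} (\<lambda>r. norm (v' r))"
proof -
  define w where "w = (1/2) *\<^sub>R (v \<tau> + v \<sigma>)"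
  note v'[of w]
  moreover have "(v \<tau> - v \<sigma>) \<bullet> w = (norm (v \<tau>))\<^sup>2 / 2 - (norm (v \<sigma>))\<^sup>2 / 2"
    unfolding w_def
    by (simp add: inner_diff_left inner_add_right power2_norm_eq_inner inner_commute[of "v \<sigma>" "v \<tau>"] field_simps)
  ultimately have diff: "((\<lambda>r. v' r \<bullet> w - \<psi> r) has_integral
      ((norm (v \<tau>))\<^sup>2 / 2 - (norm (v \<sigma>))\<^sup>2 / 2 - integral {\<sigma>..\<tau>} \<psi>)) {\<sigma>..\<tau>}"
    using has_integral_diff[OF _ integrable_integral[OF \<psi>_int]] by simp
  have bound: "\<bar>v' r \<bullet> w - \<psi> r\<bar> \<le> e * norm (v' r)" if r: "r \<in> {\<sigma>..\<tau>} - N" for r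
  proof -
    have "w - v r = (1/2) *\<^sub>R (v \<tau> - v r) + (1/2) *\<^sub>R (v \<sigma> - v r)"
      by (simp add: w_def algebra_simps flip: scaleR_add_left)
    then have "norm (w - v r) \<le> norm ((1/2) *\<^sub>R (v \<tau> - v r)) + norm ((1/2) *\<^sub>R (v \<sigma> - v r))"
      by (simp only: norm_triangle_ineq)
    also have "\<dots> = norm (v \<tau> - v r) / 2 + norm (v \<sigma> - v r) / 2" by simp
    also have "\<dots> \<le> e" using close[of r] r by auto
    finally have "norm (w - v r) \<le> e" .
    have "v' r \<bullet> w - \<psi> r = v' r \<bullet> (w - v r)" using \<psi>_eq[OF r] by (simp add: inner_diff_right)
    also have "\<bar>\<dots>\<bar> \<le> norm (v' r) * norm (w - v r)" by (rule Cauchy_Schwarz_ineq2)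
    also have "\<dots> \<le> norm (v' r) * e" using \<open>norm (w - v r) \<le> e\<close> by (intro mult_left_mono) auto
    finally show ?thesis by (simp add: mult.commute)
  qed
  have e_int: "(\<lambda>r. e * norm (v' r)) integrable_on {\<sigma>..\<tau>}"
    using norm_int by (rule integrable_on_mult_right)
  have "integral {\<sigma>..\<tau>} (\<lambda>r. v' r \<bullet> w - \<psi> r) \<le> integral {\<sigma>..\<tau>} (\<lambda>r. e * norm (v' r))"
    by (rule integral_le_off_negligible[OF has_integral_integrable[OF diff] e_int \<open>negligible N\<close>])
      (use bound in force)
  moreover have "integral {\<sigma>..\<tau>} (\<lambda>r. - (v' r \<bullet> w - \<psi> r)) \<le> integral {\<sigma>..\<tau>} (\<lambda>r. e * norm (v' r))"
    by (rule integral_le_off_negligible[OF integrable_neg[OF has_integral_integrable[OF diff]] e_int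
        \<open>negligible N\<close>]) (use bound in force)
  ultimately show ?thesis
    unfolding integral_neg integral_unique[OF diff] by simp
qed

lemma half_norm_power2_eq_integral:
  fixes v v' :: "real \<Rightarrow> 'a::real_inner" and \<psi> :: "real \<Rightarrow> real"
  assumes "a \<le> b" and v_cont: "continuous_on {a..b} v"
    and v': "\<And>s t w. a \<le> s \<Longrightarrow> s \<le> t \<Longrightarrow> t \<le> b \<Longrightarrow>
               ((\<lambda>r. v' r \<bullet> w) has_integral ((v t - v s) \<bullet> w)) {s..t}"
    and norm_int: "(\<lambda>r. norm (v' r)) integrable_on {a..b}" and \<psi>_int: "\<psi> integrable_on {a..b}"
    and "negligible N" and \<psi>_eq: "\<And>r. r \<in> {a..b} - N \<Longrightarrow> \<psi> r = v' r \<bullet> v r"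
  shows "(norm (v b))\<^sup>2 / 2 = (norm (v a))\<^sup>2 / 2 + integral {a..b} \<psi>"
proof -
  define H where "H t = (norm (v t))\<^sup>2 / 2 - integral {a..t} \<psi>" for t
  define G where "G t = integral {a..t} (\<lambda>r. norm (v' r))" for t
  have G_diff: "G t - G s = integral {s..t} (\<lambda>r. norm (v' r))" if "a \<le> s" "s \<le> t" "t \<le> b" for s t
    unfolding G_def by (rule integral_diff_initial_segments[OF norm_int that])
  have "H b = H a"
  proof (rule eq_if_increments_locally_dominated[OF \<open>a \<le> b\<close>])
    have "integral {a..b} (\<lambda>r. norm (v' r)) \<ge> 0"
      by (rule Henstock_Kurzweil_Integration.integral_nonneg[OF norm_int]) simp
    then show "G a \<le> G b" using G_diff[of a b] \<open>a \<le> b\<close> by simp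
    fix e :: real assume "e > 0"
    then obtain d where "d > 0" and d: "\<And>u u'. u \<in> {a..b} \<Longrightarrow> u' \<in> {a..b} \<Longrightarrow> dist u' u < d
        \<Longrightarrow> dist (v u') (v u) < e"
      using compact_uniformly_continuous[OF v_cont compact_Icc, unfolded uniformly_continuous_on_def]
      by force
    show "\<exists>d>0. \<forall>s t. a \<le> s \<longrightarrow> s \<le> t \<longrightarrow> t \<le> b \<longrightarrow> t - s < d \<longrightarrow> \<bar>H t - H s\<bar> \<le> e * (G t - G s)"
    proof (intro exI[of _ d] conjI allI impI \<open>d > 0\<close>)
      fix s t assume st: "a \<le> s" "s \<le> t" "t \<le> b" "t - s < d"
      have "H t - H s = (norm (v t))\<^sup>2 / 2 - (norm (v s))\<^sup>2 / 2 - integral {s..t} \<psi>"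
        using integral_diff_initial_segments[OF \<psi>_int st(1-3)] by (simp add: H_def)
      moreover have "\<bar>\<dots>\<bar> \<le> e * integral {s..t} (\<lambda>r. norm (v' r))"
      proof (rule half_norm_power2_increment_local[OF st(2) v'[OF st(1-3)] _ _ \<open>negligible N\<close>])
        show "(\<lambda>r. norm (v' r)) integrable_on {s..t}" "\<psi> integrable_on {s..t}"
          using st by (auto intro: integrable_subinterval_real[OF norm_int] integrable_subinterval_real[OF \<psi>_int])
        show "\<psi> r = v' r \<bullet> v r" if "r \<in> {s..t} - N" for r using \<psi>_eq that st by auto
        show "norm (v t - v r) \<le> e \<and> norm (v s - v r) \<le> e" if "r \<in> {s..t}" for r
          using d[of r t] d[of r s] that st by (auto simp: dist_norm dist_real_def)
      qed
      ultimately show "\<bar>H t - H s\<bar> \<le> e * (G t - G s)" using G_diff[OF st(1-3)] by simp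
    qed
  qed
  then show ?thesis by (simp add: H_def)
qed

lemma inner_defect_increment_local:
  fixes x v v' :: "real \<Rightarrow> 'a::real_inner" and \<rho> :: "real \<Rightarrow> real"
  assumes "\<sigma> \<le> \<tau>"
    and x: "((\<lambda>r. v r \<bullet> v \<tau>) has_integral ((x \<tau> - x \<sigma>) \<bullet> v \<tau>)) {\<sigma>..\<tau>}"
    and v': "((\<lambda>r. v' r \<bullet> (x \<sigma> - z)) has_integral ((v \<tau> - v \<sigma>) \<bullet> (x \<sigma> - z))) {\<sigma>..\<tau>}"
    and norm_int: "(\<lambda>r. norm (v' r)) integrable_on {\<sigma>..\<tau>}"
    and v_int: "(\<lambda>r. (norm (v r))\<^sup>2) integrable_on {\<sigma>..\<tau>}" and \<rho>_int: "\<rho> integrable_on {\<sigma>..\<tau>}"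
    and "negligible N" and \<rho>_ge: "\<And>r. r \<in> {\<sigma>..\<tau>} - N \<Longrightarrow> v' r \<bullet> (x r - z) \<le> \<rho> r"
    and close: "\<And>r. r \<in> {\<sigma>..\<tau>} \<Longrightarrow> norm (v r) \<le> B \<and> norm (v \<tau> - v r) \<le> e \<and> norm (x \<sigma> - x r) \<le> e"
  shows "(x \<tau> - z) \<bullet> v \<tau> - (x \<sigma> - z) \<bullet> v \<sigma> - integral {\<sigma>..\<tau>} (\<lambda>r. (norm (v r))\<^sup>2 + \<rho> r)
           \<le> e * (B * (\<tau> - \<sigma>) + integral {\<sigma>..\<tau>} (\<lambda>r. norm (v' r)))"
proof -
  have "((\<lambda>r. v r \<bullet> v \<tau> - (norm (v r))\<^sup>2) has_integral
      ((x \<tau> - x \<sigma>) \<bullet> v \<tau> - integral {\<sigma>..\<tau>} (\<lambda>r. (norm (v r))\<^sup>2))) {\<sigma>..\<tau>}"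
    by (rule has_integral_diff[OF x integrable_integral[OF v_int]])
  moreover have "v r \<bullet> v \<tau> - (norm (v r))\<^sup>2 \<le> e * B" if "r \<in> {\<sigma>..\<tau>}" for r
  proof -
    have "v r \<bullet> v \<tau> - (norm (v r))\<^sup>2 = v r \<bullet> (v \<tau> - v r)"
      by (simp add: inner_diff_right power2_norm_eq_inner)
    also have "\<dots> \<le> norm (v r) * norm (v \<tau> - v r)" by (rule norm_cauchy_schwarz)
    also have "\<dots> \<le> B * e" using close[OF that] by (intro mult_mono) (auto intro: order_trans[OF norm_ge_zero])
    finally show ?thesis by (simp add: mult.commute)
  qed
  ultimately have part1: "(x \<tau> - x \<sigma>) \<bullet> v \<tau> - integral {\<sigma>..\<tau>} (\<lambda>r. (norm (v r))\<^sup>2) \<le> e * B * (\<tau> - \<sigma>)"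
    using has_integral_le[OF _ has_integral_const_real[of "e * B" \<sigma> \<tau>]] \<open>\<sigma> \<le> \<tau>\<close>
    by (auto simp: mult.commute)
  have diff2: "((\<lambda>r. v' r \<bullet> (x \<sigma> - z) - \<rho> r) has_integral
      ((v \<tau> - v \<sigma>) \<bullet> (x \<sigma> - z) - integral {\<sigma>..\<tau>} \<rho>)) {\<sigma>..\<tau>}"
    by (rule has_integral_diff[OF v' integrable_integral[OF \<rho>_int]])
  have "v' r \<bullet> (x \<sigma> - z) - \<rho> r \<le> e * norm (v' r)" if r: "r \<in> {\<sigma>..\<tau>} - N" for r
  proof -
    have "v' r \<bullet> (x \<sigma> - x r) \<le> norm (v' r) * norm (x \<sigma> - x r)" by (rule norm_cauchy_schwarz)
    also have "\<dots> \<le> norm (v' r) * e" using close[of r] r by (intro mult_left_mono) auto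
    finally show ?thesis using \<rho>_ge[OF r] by (simp add: inner_diff_right algebra_simps)
  qed
  then have part2: "(v \<tau> - v \<sigma>) \<bullet> (x \<sigma> - z) - integral {\<sigma>..\<tau>} \<rho> \<le> e * integral {\<sigma>..\<tau>} (\<lambda>r. norm (v' r))"
    using integral_le_off_negligible[OF has_integral_integrable[OF diff2]
        integrable_on_mult_right[OF norm_int, of e] \<open>negligible N\<close>]
    by (simp add: integral_unique[OF diff2])
  have "(x \<tau> - z) \<bullet> v \<tau> - (x \<sigma> - z) \<bullet> v \<sigma> = (x \<tau> - x \<sigma>) \<bullet> v \<tau> + (v \<tau> - v \<sigma>) \<bullet> (x \<sigma> - z)"
    by (simp add: inner_diff_left inner_diff_right inner_commute)
  moreover have "integral {\<sigma>..\<tau>} (\<lambda>r. (norm (v r))\<^sup>2 + \<rho> r)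
      = integral {\<sigma>..\<tau>} (\<lambda>r. (norm (v r))\<^sup>2) + integral {\<sigma>..\<tau>} \<rho>"
    by (rule integral_add[OF v_int \<rho>_int])
  ultimately show ?thesis using part1 part2 by (simp add: algebra_simps)
qed

lemma inner_defect_locally_dominated:
  fixes x v v' :: "real \<Rightarrow> 'a::real_inner" and \<rho> :: "real \<Rightarrow> real"
  assumes "a \<le> b"
    and x_deriv: "\<And>t. t \<in> {a..b} \<Longrightarrow> (x has_vector_derivative v t) (at t within {a..b})"
    and v_cont: "continuous_on {a..b} v"
    and v': "\<And>s t w. a \<le> s \<Longrightarrow> s \<le> t \<Longrightarrow> t \<le> b \<Longrightarrow>
               ((\<lambda>r. v' r \<bullet> w) has_integral ((v t - v s) \<bullet> w)) {s..t}"
    and norm_int: "(\<lambda>r. norm (v' r)) integrable_on {a..b}"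
    and \<rho>_cont: "continuous_on {a..b} \<rho>"
    and "negligible N" and \<rho>_ge: "\<And>r. r \<in> {a..b} - N \<Longrightarrow> v' r \<bullet> (x r - z) \<le> \<rho> r"
    and B: "\<And>r. r \<in> {a..b} \<Longrightarrow> norm (v r) \<le> B" and "e > 0"
  shows "\<exists>d>0. \<forall>s t. a \<le> s \<longrightarrow> s \<le> t \<longrightarrow> t \<le> b \<longrightarrow> t - s < d \<longrightarrow>
    (x t - z) \<bullet> v t - (x s - z) \<bullet> v s - integral {s..t} (\<lambda>r. (norm (v r))\<^sup>2 + \<rho> r)
      \<le> e * (B * (t - s) + integral {s..t} (\<lambda>r. norm (v' r)))"
proof -
  have x_cont: "continuous_on {a..b} x"
    using x_deriv has_vector_derivative_continuous continuous_on_eq_continuous_within by blast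
  obtain d1 where "d1 > 0" and d1: "\<And>u u'. u \<in> {a..b} \<Longrightarrow> u' \<in> {a..b} \<Longrightarrow> dist u' u < d1
      \<Longrightarrow> dist (v u') (v u) < e"
    using compact_uniformly_continuous[OF v_cont compact_Icc, unfolded uniformly_continuous_on_def]
      \<open>e > 0\<close> by force
  obtain d2 where "d2 > 0" and d2: "\<And>u u'. u \<in> {a..b} \<Longrightarrow> u' \<in> {a..b} \<Longrightarrow> dist u' u < d2
      \<Longrightarrow> dist (x u') (x u) < e"
    using compact_uniformly_continuous[OF x_cont compact_Icc, unfolded uniformly_continuous_on_def]
      \<open>e > 0\<close> by force
  show ?thesis
  proof (intro exI[of _ "min d1 d2"] conjI allI impI)
    show "min d1 d2 > 0" using \<open>d1 > 0\<close> \<open>d2 > 0\<close> by simp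
    fix s t assume st: "a \<le> s" "s \<le> t" "t \<le> b" "t - s < min d1 d2"
    show "(x t - z) \<bullet> v t - (x s - z) \<bullet> v s - integral {s..t} (\<lambda>r. (norm (v r))\<^sup>2 + \<rho> r)
      \<le> e * (B * (t - s) + integral {s..t} (\<lambda>r. norm (v' r)))"
    proof (rule inner_defect_increment_local[OF st(2) _ v'[OF st(1-3)] _ _ _ \<open>negligible N\<close>])
      show "((\<lambda>r. v r \<bullet> v t) has_integral ((x t - x s) \<bullet> v t)) {s..t}"
        using fundamental_theorem_of_calculus_subinterval[OF st(1-3)
            has_vector_derivative_inner_const[OF x_deriv]]
        by (simp add: inner_diff_left)
      show "(\<lambda>r. norm (v' r)) integrable_on {s..t}"
        by (rule integrable_subinterval_real[OF norm_int]) (use st in auto)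
      show "(\<lambda>r. (norm (v r))\<^sup>2) integrable_on {s..t}" "\<rho> integrable_on {s..t}"
        using st by (auto intro!: integrable_continuous_interval continuous_intros
            continuous_on_subset[OF v_cont] continuous_on_subset[OF \<rho>_cont])
      show "v' r \<bullet> (x r - z) \<le> \<rho> r" if "r \<in> {s..t} - N" for r using \<rho>_ge that st by auto
      show "norm (v r) \<le> B \<and> norm (v t - v r) \<le> e \<and> norm (x s - x r) \<le> e" if "r \<in> {s..t}" for r
        using B[of r] d1[of r t] d2[of r s] that st by (auto simp: dist_norm dist_real_def)
    qed
  qed
qed

text \<open>This replaces differentiating \<open>(x - z) \<bullet> x'\<close>, which need not be differentiable.\<close>
lemma inner_defect_antimono:
  fixes x v v' :: "real \<Rightarrow> 'a::real_inner" and \<rho> :: "real \<Rightarrow> real"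
  assumes "a \<le> b"
    and x_deriv: "\<And>t. t \<in> {a..b} \<Longrightarrow> (x has_vector_derivative v t) (at t within {a..b})"
    and v_cont: "continuous_on {a..b} v"
    and v': "\<And>s t w. a \<le> s \<Longrightarrow> s \<le> t \<Longrightarrow> t \<le> b \<Longrightarrow>
               ((\<lambda>r. v' r \<bullet> w) has_integral ((v t - v s) \<bullet> w)) {s..t}"
    and norm_int: "(\<lambda>r. norm (v' r)) integrable_on {a..b}"
    and \<rho>_cont: "continuous_on {a..b} \<rho>"
    and "negligible N" and \<rho>_ge: "\<And>r. r \<in> {a..b} - N \<Longrightarrow> v' r \<bullet> (x r - z) \<le> \<rho> r"
  shows "(x b - z) \<bullet> v b - integral {a..b} (\<lambda>r. (norm (v r))\<^sup>2 + \<rho> r) \<le> (x a - z) \<bullet> v a"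
proof -
  define J where "J r = (norm (v r))\<^sup>2 + \<rho> r" for r
  define D where "D t = (x t - z) \<bullet> v t - integral {a..t} J" for t
  have J_int: "J integrable_on {a..b}"
    unfolding J_def[abs_def] by (intro integrable_continuous_interval continuous_intros v_cont \<rho>_cont)
  obtain B where B: "\<And>r. r \<in> {a..b} \<Longrightarrow> norm (v r) \<le> B"
    using compact_imp_bounded[OF compact_continuous_image[OF v_cont compact_Icc]]
    unfolding bounded_iff by fastforce
  have "B \<ge> 0" using B[of a] \<open>a \<le> b\<close> by (auto intro: order_trans[OF norm_ge_zero])
  define G where "G t = B * t + integral {a..t} (\<lambda>r. norm (v' r))" for t
  have G_diff: "G t - G s = B * (t - s) + integral {s..t} (\<lambda>r. norm (v' r))"
    if "a \<le> s" "s \<le> t" "t \<le> b" for s t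
    using integral_diff_initial_segments[OF norm_int that] by (simp add: G_def algebra_simps)
  have "D b \<le> D a"
  proof (rule le_if_increments_locally_dominated[OF \<open>a \<le> b\<close>])
    have "integral {a..b} (\<lambda>r. norm (v' r)) \<ge> 0"
      by (rule Henstock_Kurzweil_Integration.integral_nonneg[OF norm_int]) simp
    moreover have "B * (b - a) \<ge> 0" using \<open>a \<le> b\<close> \<open>B \<ge> 0\<close> by simp
    ultimately show "G a \<le> G b" using G_diff[of a b] \<open>a \<le> b\<close> by linarith
    fix e :: real assume "e > 0"
    then obtain d where "d > 0" and d: "\<And>s t. a \<le> s \<Longrightarrow> s \<le> t \<Longrightarrow> t \<le> b \<Longrightarrow> t - s < d \<Longrightarrow>
        (x t - z) \<bullet> v t - (x s - z) \<bullet> v s - integral {s..t} J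
          \<le> e * (B * (t - s) + integral {s..t} (\<lambda>r. norm (v' r)))"
      using inner_defect_locally_dominated[OF assms B] unfolding J_def by blast
    show "\<exists>d>0. \<forall>s t. a \<le> s \<longrightarrow> s \<le> t \<longrightarrow> t \<le> b \<longrightarrow> t - s < d \<longrightarrow> D t - D s \<le> e * (G t - G s)"
    proof (intro exI[of _ d] conjI allI impI \<open>d > 0\<close>)
      fix s t assume st: "a \<le> s" "s \<le> t" "t \<le> b" "t - s < d"
      show "D t - D s \<le> e * (G t - G s)"
        using d[OF st] integral_diff_initial_segments[OF J_int st(1-3)] G_diff[OF st(1-3)]
        by (simp add: D_def)
    qed
  qed
  then show ?thesis by (simp add: D_def J_def[abs_def])
qed

section \<open>Trajectories of (MTRIGS)\<close>

locale mtrigs_trajectory =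
  fixes f :: "'m::finite \<Rightarrow> 'a::{real_inner,complete_space} \<Rightarrow> real"
    and df :: "'m \<Rightarrow> 'a \<Rightarrow> 'a"
    and t0 \<alpha> \<beta> q p :: real
    and x0 v0 :: 'a
    and x x' x'' :: "real \<Rightarrow> 'a"
  assumes grad: "\<And>i z. (f i has_derivative (\<lambda>h. df i z \<bullet> h)) (at z)"
    and conv: "\<And>i. convex_on UNIV (f i)"
    and lip: "\<And>i. \<exists>L. L-lipschitz_on UNIV (df i)"
    and t0: "t0 > 0" and \<alpha>: "\<alpha> > 0" and \<beta>: "\<beta> > 0"
    and q: "0 < q" and p: "p < 2" and qp: "q + 1 < p"
    and A3_nonempty: "\<And>z. z \<in> levelset f (Fvec f x0 + (\<chi> i. \<beta> / (2 * t0 powr p) * (norm x0)\<^sup>2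
                                                   + 1/2 * (norm v0)\<^sup>2))
               \<Longrightarrow> LPw f (Fvec f z) \<noteq> {}"
    and A3_bounded: "\<exists>R. \<forall>Fs \<in> Fvec f ` LPw f (Fvec f x0 + (\<chi> i. \<beta> / (2 * t0 powr p) * (norm x0)\<^sup>2
                                                   + 1/2 * (norm v0)\<^sup>2)).
                 (INF z\<in>{z. Fvec f z = Fs}. norm z) \<le> R"
    and A4_nonempty: "\<And>w. Sset f w \<noteq> {}"
    and x_deriv: "\<And>t. t \<ge> t0 \<Longrightarrow> (x has_vector_derivative x' t) (at t within {t0..})"
    and x'_cont: "continuous_on {t0..} x'"
    and x''_norm_integrable: "\<And>T. T \<ge> t0 \<Longrightarrow> (\<lambda>s. norm (x'' s)) integrable_on {t0..T}"
    and x'_integral: "\<And>t. t \<ge> t0 \<Longrightarrow> (x'' has_integral (x' t - x' t0)) {t0..t}"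
    and equation: "AE t in lebesgue. t \<ge> t0 \<longrightarrow>
               (\<alpha> / t powr q) *\<^sub>R x' t
                 + hproj ((\<lambda>g. g + (\<beta> / t powr p) *\<^sub>R x t + x'' t) ` Cset df (x t)) 0 = 0"
    and init: "x t0 = x0" "x' t0 = v0"
begin

definition "damping t = \<alpha> / t powr q"
definition "tikhonov t = \<beta> / t powr p"
definition "tikhonov' t = - (p * \<beta> / t powr (p + 1))"
definition "max_slope t = (MAX i. x' t \<bullet> df i (x t))"
definition "min_gap z t = (MIN i. f i (x t) - f i z)"

lemma q_lt_1: "q < 1" using qp p by simp

lemma p_pos: "p > 0" using qp q by simp

lemma damping_pos: "t > 0 \<Longrightarrow> damping t > 0" using \<alpha> by (simp add: damping_def)

lemma tikhonov_pos: "t > 0 \<Longrightarrow> tikhonov t > 0" using \<beta> by (simp add: tikhonov_def)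

lemma tikhonov'_neg: "t > 0 \<Longrightarrow> tikhonov' t < 0" using \<beta> p_pos by (simp add: tikhonov'_def)

lemma continuous_on_f: "continuous_on S (f i)"
  using grad[of i] by (meson continuous_at_imp_continuous_on has_derivative_continuous)

lemma continuous_on_x: "continuous_on {t0..} x"
  using x_deriv has_vector_derivative_continuous continuous_on_eq_continuous_within by fastforce

lemma x_deriv_subinterval: "t0 \<le> s \<Longrightarrow> r \<in> {s..t} \<Longrightarrow> (x has_vector_derivative x' r) (at r within {s..t})"
  by (rule has_vector_derivative_within_subset[OF x_deriv]) auto

lemma continuous_on_damping: "continuous_on {t0..} damping"
  unfolding damping_def[abs_def] using t0 by (intro continuous_intros) auto

lemma continuous_on_tikhonov: "continuous_on {t0..} tikhonov"
  unfolding tikhonov_def[abs_def] using t0 by (intro continuous_intros) auto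

lemma continuous_on_max_slope: "continuous_on {t0..} max_slope"
proof -
  have "continuous_on {t0..} (\<lambda>t. df i (x t))" for i
    using lip[of i] lipschitz_on_continuous_on continuous_on_x
    by (blast intro: continuous_on_compose2[of UNIV])
  then show ?thesis
    unfolding max_slope_def[abs_def]
    by (intro continuous_on_Max_image continuous_intros x'_cont) auto
qed

lemma continuous_on_min_gap: "continuous_on {t0..} (min_gap z)"
  unfolding min_gap_def[abs_def]
  by (intro continuous_on_Min_image continuous_intros
      continuous_on_compose2[OF continuous_on_f[of UNIV] continuous_on_x]) auto

lemma integrable_on_if_continuous_on_tail:
  fixes g :: "real \<Rightarrow> real"
  shows "continuous_on {t0..} g \<Longrightarrow> t0 \<le> s \<Longrightarrow> g integrable_on {s..t}"
  by (rule integrable_continuous_interval, erule continuous_on_subset) auto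

lemma x''_inner_has_integral:
  assumes "t0 \<le> s" "s \<le> t"
  shows "((\<lambda>r. x'' r \<bullet> w) has_integral ((x' t - x' s) \<bullet> w)) {s..t}"
proof -
  have from_t0: "((\<lambda>r. x'' r \<bullet> w) has_integral ((x' u - x' t0) \<bullet> w)) {t0..u}" if "u \<ge> t0" for u
    using has_integral_linear[OF x'_integral[OF that] bounded_linear_inner_left, of w] by (simp add: o_def)
  have "integral {t0..t} (\<lambda>r. x'' r \<bullet> w) - integral {t0..s} (\<lambda>r. x'' r \<bullet> w) = integral {s..t} (\<lambda>r. x'' r \<bullet> w)"
    by (rule integral_diff_initial_segments[OF has_integral_integrable[OF from_t0[of t]]]) (use assms in auto)
  then have "integral {s..t} (\<lambda>r. x'' r \<bullet> w) = (x' t - x' s) \<bullet> w"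
    using integral_unique[OF from_t0[of t]] integral_unique[OF from_t0[of s]] assms
    by (simp add: inner_diff_left)
  moreover have "(\<lambda>r. x'' r \<bullet> w) integrable_on {s..t}"
    by (rule integrable_subinterval_real[OF has_integral_integrable[OF from_t0[of t]]]) (use assms in auto)
  ultimately show ?thesis by (simp add: has_integral_iff)
qed

lemma x''_norm_integrable_subinterval: "t0 \<le> s \<Longrightarrow> s \<le> t \<Longrightarrow> (\<lambda>r. norm (x'' r)) integrable_on {s..t}"
  by (rule integrable_subinterval_real[OF x''_norm_integrable[of t]]) auto

lemma selection_from_equation:
  assumes "t \<ge> t0" and eq: "(\<alpha> / t powr q) *\<^sub>R x' t
                 + hproj ((\<lambda>g. g + (\<beta> / t powr p) *\<^sub>R x t + x'' t) ` Cset df (x t)) 0 = 0"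
  obtains g where "g \<in> Cset df (x t)" "x'' t = - damping t *\<^sub>R x' t - tikhonov t *\<^sub>R x t - g"
    "x' t \<bullet> g = max_slope t"
proof -
  define C where "C = Cset df (x t)"
  define w where "w = tikhonov t *\<^sub>R x t + x'' t"
  have "compact C" "convex C" "C \<noteq> {}"
    unfolding C_def Cset_def by (auto intro: finite_imp_compact_convex_hull)
  then obtain g where g: "g \<in> C" "hproj ((\<lambda>c. c + w) ` C) 0 = g + w"
    and vi: "\<And>c. c \<in> C \<Longrightarrow> (g + w) \<bullet> (c - g) \<ge> 0"
    by (rule hproj_zero_translate[where w = w]) blast
  have "damping t *\<^sub>R x' t + (g + w) = 0"
    using eq g(2) by (simp add: C_def w_def damping_def tikhonov_def add.assoc)
  then have gw: "g + w = - damping t *\<^sub>R x' t" by (simp add: eq_neg_iff_add_eq_0 add.commute)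
  have "damping t > 0" using damping_pos \<open>t \<ge> t0\<close> t0 by simp
  have "x' t \<bullet> c \<le> x' t \<bullet> g" if "c \<in> C" for c
    using vi[OF that] \<open>damping t > 0\<close> unfolding gw
    by (simp add: inner_diff_right mult_le_0_iff)
  then have "max_slope t \<le> x' t \<bullet> g"
    unfolding max_slope_def C_def Cset_def by (simp add: hull_inc)
  moreover have "x' t \<bullet> g \<le> max_slope t"
    using g(1) unfolding max_slope_def C_def Cset_def by (rule inner_le_Max_if_in_convex_hull)
  ultimately show thesis
    using g(1) gw by (intro that[of g]) (auto simp: C_def w_def algebra_simps)
qed

lemma min_gap_le_inner:
  assumes "g \<in> Cset df (x t)"
  shows "min_gap z t \<le> g \<bullet> (x t - z)"
proof -
  have "min_gap z t \<le> (x t - z) \<bullet> df i (x t)" for i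
  proof -
    have "min_gap z t \<le> f i (x t) - f i z" unfolding min_gap_def by (rule Min_le) auto
    moreover have "f i (x t) + df i (x t) \<bullet> (z - x t) \<le> f i z"
      by (rule convex_on_gradient_inequality[OF conv grad])
    ultimately show ?thesis by (simp add: inner_diff_right inner_diff_left inner_commute)
  qed
  then have "min_gap z t \<le> (MIN i. (x t - z) \<bullet> df i (x t))" by (simp add: Min_ge_iff)
  also have "\<dots> \<le> (x t - z) \<bullet> g"
    using assms unfolding Cset_def by (rule inner_ge_Min_if_in_convex_hull)
  finally show ?thesis by (simp add: inner_commute)
qed

lemma equation_off_null_set:
  obtains N where "negligible N"
    "\<And>t. t \<ge> t0 \<Longrightarrow> t \<notin> N \<Longrightarrow>
        x'' t \<bullet> x' t = - damping t * (norm (x' t))\<^sup>2 - tikhonov t * (x t \<bullet> x' t) - max_slope t"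
    "\<And>t z. t \<ge> t0 \<Longrightarrow> t \<notin> N \<Longrightarrow>
        x'' t \<bullet> (x t - z) \<le> - damping t * ((x t - z) \<bullet> x' t) - tikhonov t * (x t \<bullet> (x t - z)) - min_gap z t"
proof -
  obtain N where N: "negligible N" and eq: "\<And>t. t \<ge> t0 \<Longrightarrow> t \<notin> N \<Longrightarrow> (\<alpha> / t powr q) *\<^sub>R x' t
       + hproj ((\<lambda>g. g + (\<beta> / t powr p) *\<^sub>R x t + x'' t) ` Cset df (x t)) 0 = 0"
    using equation unfolding eventually_ae_filter negligible_iff_null_sets null_sets_def by force
  have both: "x'' t \<bullet> x' t = - damping t * (norm (x' t))\<^sup>2 - tikhonov t * (x t \<bullet> x' t) - max_slope t
    \<and> (\<forall>z. x'' t \<bullet> (x t - z) \<le> - damping t * ((x t - z) \<bullet> x' t) - tikhonov t * (x t \<bullet> (x t - z)) - min_gap z t)"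
    if t: "t \<ge> t0" "t \<notin> N" for t
  proof -
    obtain g where g: "g \<in> Cset df (x t)" and x'': "x'' t = - damping t *\<^sub>R x' t - tikhonov t *\<^sub>R x t - g"
      and slope: "x' t \<bullet> g = max_slope t"
      using selection_from_equation[OF t(1) eq[OF t]] .
    note gap = min_gap_le_inner[OF g]
    have calc: "x'' t \<bullet> u = - damping t * (x' t \<bullet> u) - tikhonov t * (x t \<bullet> u) - g \<bullet> u" for u
      unfolding x'' by (simp add: inner_diff_left)
    show ?thesis
    proof (intro conjI allI)
      show "x'' t \<bullet> x' t = - damping t * (norm (x' t))\<^sup>2 - tikhonov t * (x t \<bullet> x' t) - max_slope t"
        using calc[of "x' t"] slope[unfolded inner_commute[of "x' t" g]] by (simp add: power2_norm_eq_inner)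
      fix z
      have "x'' t \<bullet> (x t - z)
          = - damping t * ((x t - z) \<bullet> x' t) - tikhonov t * (x t \<bullet> (x t - z)) - g \<bullet> (x t - z)"
        using calc[of "x t - z"] by (simp only: inner_commute[of "x' t"])
      then show "x'' t \<bullet> (x t - z)
          \<le> - damping t * ((x t - z) \<bullet> x' t) - tikhonov t * (x t \<bullet> (x t - z)) - min_gap z t"
        using gap[of z] by linarith
    qed
  qed
  show thesis
    by (rule that[OF N]) (use both in blast)+
qed

definition "kinetic_rate t = - damping t * (norm (x' t))\<^sup>2 - tikhonov t * (x t \<bullet> x' t) - max_slope t"

lemma continuous_on_kinetic_rate: "continuous_on {t0..} kinetic_rate"
  unfolding kinetic_rate_def[abs_def]
  by (intro continuous_intros continuous_on_damping continuous_on_tikhonov continuous_on_max_slope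
      continuous_on_x x'_cont)

lemma kinetic_energy_eq: "t \<ge> t0 \<Longrightarrow> (norm (x' t))\<^sup>2 / 2 = (norm v0)\<^sup>2 / 2 + integral {t0..t} kinetic_rate"
proof -
  assume "t \<ge> t0"
  obtain N where "negligible N" and N: "\<And>t. t \<ge> t0 \<Longrightarrow> t \<notin> N \<Longrightarrow> x'' t \<bullet> x' t = kinetic_rate t"
    unfolding kinetic_rate_def by (rule equation_off_null_set) blast
  have "(norm (x' t))\<^sup>2 / 2 = (norm (x' t0))\<^sup>2 / 2 + integral {t0..t} kinetic_rate"
  proof (rule half_norm_power2_eq_integral[OF \<open>t \<ge> t0\<close> _ x''_inner_has_integral _ _ \<open>negligible N\<close>])
    show "continuous_on {t0..t} x'" by (rule continuous_on_subset[OF x'_cont]) auto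
    show "(\<lambda>r. norm (x'' r)) integrable_on {t0..t}" by (rule x''_norm_integrable[OF \<open>t \<ge> t0\<close>])
    show "kinetic_rate integrable_on {t0..t}"
      by (rule integrable_on_if_continuous_on_tail[OF continuous_on_kinetic_rate order_refl])
    show "kinetic_rate r = x'' r \<bullet> x' r" if "r \<in> {t0..t} - N" for r using N[of r] that by auto
  qed auto
  then show ?thesis by (simp add: init)
qed


definition "slope_integral t = integral {t0..t} max_slope"
definition "energy t = slope_integral t + (norm (x' t))\<^sup>2 / 2 + tikhonov t * (norm (x t))\<^sup>2 / 2"
definition "energy_rate t = - damping t * (norm (x' t))\<^sup>2 + tikhonov' t * (norm (x t))\<^sup>2 / 2"

lemma has_vector_derivative_slope_integral:
  "t0 \<le> \<tau> \<Longrightarrow> \<tau> \<le> T \<Longrightarrow> (slope_integral has_vector_derivative max_slope \<tau>) (at \<tau> within {t0..T})"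
  unfolding slope_integral_def[abs_def]
  by (intro integral_has_vector_derivative continuous_on_subset[OF continuous_on_max_slope]) auto

lemma has_vector_derivative_kinetic_energy:
  assumes "t0 \<le> \<tau>" "\<tau> \<le> T"
  shows "((\<lambda>t. (norm (x' t))\<^sup>2 / 2) has_vector_derivative kinetic_rate \<tau>) (at \<tau> within {t0..T})"
proof -
  have "((\<lambda>t. integral {t0..t} kinetic_rate) has_vector_derivative kinetic_rate \<tau>) (at \<tau> within {t0..T})"
    by (rule integral_has_vector_derivative[OF continuous_on_subset[OF continuous_on_kinetic_rate]])
      (use assms in auto)
  then have "((\<lambda>t. integral {t0..t} kinetic_rate + (norm v0)\<^sup>2 / 2) has_vector_derivative kinetic_rate \<tau>)
      (at \<tau> within {t0..T})"
    by (rule has_vector_derivative_add_const[THEN iffD2])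
  then show ?thesis
    by (rule has_vector_derivative_transform[rotated 2]) (use assms kinetic_energy_eq in auto)
qed

lemma has_real_derivative_tikhonov:
  assumes "t0 \<le> \<tau>"
  shows "(tikhonov has_real_derivative tikhonov' \<tau>) (at \<tau>)"
proof -
  have "\<tau> > 0" using assms t0 by simp
  have "\<beta> * (- p * \<tau> powr (- p - 1)) = tikhonov' \<tau>"
  proof -
    have "\<tau> powr (- p - 1) = inverse (\<tau> powr (p + 1))" by (simp add: powr_minus[symmetric])
    then show ?thesis by (simp add: tikhonov'_def field_simps)
  qed
  moreover have "((\<lambda>s. \<beta> * s powr (- p)) has_real_derivative \<beta> * (- p * \<tau> powr (- p - 1))) (at \<tau>)"
    using \<open>\<tau> > 0\<close> by (intro DERIV_cmult has_real_derivative_powr)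
  ultimately have "((\<lambda>s. \<beta> * s powr (- p)) has_real_derivative tikhonov' \<tau>) (at \<tau>)" by simp
  then show ?thesis
    by (rule has_field_derivative_transform_within_open[where S = "{0<..}"])
      (use \<open>\<tau> > 0\<close> in \<open>auto simp: tikhonov_def powr_minus divide_inverse\<close>)
qed

lemma has_vector_derivative_energy:
  assumes "t0 \<le> \<tau>" "\<tau> \<le> T"
  shows "(energy has_vector_derivative energy_rate \<tau>) (at \<tau> within {t0..T})"
proof -
  have "(slope_integral has_real_derivative max_slope \<tau>) (at \<tau> within {t0..T})"
    "((\<lambda>t. (norm (x' t))\<^sup>2 / 2) has_real_derivative kinetic_rate \<tau>) (at \<tau> within {t0..T})"
    "((\<lambda>t. (norm (x t))\<^sup>2) has_real_derivative 2 * (x \<tau> \<bullet> x' \<tau>)) (at \<tau> within {t0..T})"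
    using has_vector_derivative_slope_integral[OF assms] has_vector_derivative_kinetic_energy[OF assms]
      has_vector_derivative_norm_power2[OF x_deriv_subinterval[OF order_refl]] assms
    by (simp_all add: has_real_derivative_iff_has_vector_derivative)
  then have "(energy has_real_derivative max_slope \<tau> + kinetic_rate \<tau>
      + (tikhonov' \<tau> * (norm (x \<tau>))\<^sup>2 + 2 * (x \<tau> \<bullet> x' \<tau>) * tikhonov \<tau>) / 2) (at \<tau> within {t0..T})"
    unfolding energy_def[abs_def]
    by (intro DERIV_add DERIV_cdivide DERIV_mult
        has_field_derivative_at_within[OF has_real_derivative_tikhonov[OF assms(1)]])
  moreover have "max_slope \<tau> + kinetic_rate \<tau>
      + (tikhonov' \<tau> * (norm (x \<tau>))\<^sup>2 + 2 * (x \<tau> \<bullet> x' \<tau>) * tikhonov \<tau>) / 2 = energy_rate \<tau>"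
    by (simp add: kinetic_rate_def energy_rate_def algebra_simps)
  ultimately show ?thesis by (simp add: has_real_derivative_iff_has_vector_derivative)
qed

lemma energy_rate_le_damping: "t \<ge> t0 \<Longrightarrow> energy_rate t \<le> - damping t * (norm (x' t))\<^sup>2"
  using tikhonov'_neg[of t] t0 by (simp add: energy_rate_def mult_nonpos_nonneg)

lemma energy_antimono: "t0 \<le> s \<Longrightarrow> s \<le> t \<Longrightarrow> energy t \<le> energy s"
proof -
  assume "t0 \<le> s" "s \<le> t"
  have "- energy s \<le> - energy t"
  proof (rule le_if_nonneg_vector_derivative[OF \<open>t0 \<le> s\<close> \<open>s \<le> t\<close> order_refl])
    fix r assume "r \<in> {t0..t}"
    then show "((\<lambda>r. - energy r) has_vector_derivative - energy_rate r) (at r within {t0..t})"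
      by (intro has_vector_derivative_minus[OF has_vector_derivative_energy]) auto
    have "damping r * (norm (x' r))\<^sup>2 \<ge> 0"
      using damping_pos[of r] \<open>r \<in> {t0..t}\<close> t0 by simp
    then show "- energy_rate r \<ge> 0"
      using energy_rate_le_damping[of r] \<open>r \<in> {t0..t}\<close> by simp
  qed
  then show ?thesis by simp
qed

lemma has_vector_derivative_f_along:
  assumes "t0 \<le> \<tau>" "\<tau> \<le> T"
  shows "((\<lambda>t. f i (x t)) has_vector_derivative df i (x \<tau>) \<bullet> x' \<tau>) (at \<tau> within {t0..T})"
proof -
  have "(x has_derivative (\<lambda>h. h *\<^sub>R x' \<tau>)) (at \<tau> within {t0..T})"
    using x_deriv_subinterval[of t0 \<tau>] assms by (auto simp: has_vector_derivative_def)
  from has_derivative_compose[OF this grad] show ?thesis by (simp add: has_vector_derivative_def)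
qed

lemma slope_integral_minus_f_mono:
  assumes "t0 \<le> s" "s \<le> t"
  shows "slope_integral s - f i (x s) \<le> slope_integral t - f i (x t)"
proof (rule le_if_nonneg_vector_derivative[OF assms order_refl])
  fix r assume "r \<in> {t0..t}"
  then show "((\<lambda>r. slope_integral r - f i (x r)) has_vector_derivative max_slope r - df i (x r) \<bullet> x' r)
      (at r within {t0..t})"
    by (intro has_vector_derivative_diff has_vector_derivative_slope_integral has_vector_derivative_f_along) auto
  have "x' r \<bullet> df i (x r) \<le> max_slope r" unfolding max_slope_def by (rule Max_ge) auto
  then show "max_slope r - df i (x r) \<bullet> x' r \<ge> 0" by (simp add: inner_commute)
qed

lemma slope_integral_le_energy: "t \<ge> t0 \<Longrightarrow> slope_integral t \<le> energy t"
  using tikhonov_pos[of t] t0 by (simp add: energy_def)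

lemma energy_t0: "energy t0 = (norm v0)\<^sup>2 / 2 + tikhonov t0 * (norm x0)\<^sup>2 / 2"
  by (simp add: energy_def slope_integral_def init)

lemma f_along_le: "t \<ge> t0 \<Longrightarrow> f i (x t) \<le> f i x0 + energy t0"
  using slope_integral_minus_f_mono[of t0 t i] slope_integral_le_energy[of t] energy_antimono[of t0 t]
  by (simp add: slope_integral_def init)

text \<open>Assumption (A3) enters only here: points of the trajectory stay in the level set,
  whose weakly Pareto optimal points have bounded representatives.\<close>
lemma f_along_bounded_below: "\<exists>L. \<forall>i t. t \<ge> t0 \<longrightarrow> L i \<le> f i (x t)"
proof -
  define b where "b = Fvec f x0 + (\<chi> i. \<beta> / (2 * t0 powr p) * (norm x0)\<^sup>2 + 1/2 * (norm v0)\<^sup>2)"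
  have b: "b $ i = f i x0 + energy t0" for i
    by (simp add: b_def Fvec_def energy_t0 tikhonov_def field_simps)
  obtain R where R: "\<And>F. F \<in> Fvec f ` LPw f b \<Longrightarrow> (INF z\<in>{z. Fvec f z = F}. norm z) \<le> R"
    using A3_bounded unfolding b_def by blast
  have "f i 0 - norm (df i 0) * (R + 1) \<le> f i (x t)" if "t \<ge> t0" for i t
  proof -
    have "x t \<in> levelset f b" using f_along_le[OF that] b by (simp add: levelset_def)
    then obtain z where z: "z \<in> LPw f (Fvec f (x t))" using A3_nonempty unfolding b_def by blast
    have z_le: "f j z \<le> f j (x t)" for j using z by (simp add: LPw_def levelset_def Fvec_def)
    have "z \<in> LPw f b"
      using z z_le f_along_le[OF that] b by (auto simp: LPw_def levelset_def intro: order_trans)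
    then have "Inf (norm ` {z'. Fvec f z' = Fvec f z}) < R + 1" using R by fastforce
    then obtain z' where z': "Fvec f z' = Fvec f z" "norm z' < R + 1"
      using cInf_lessD[of "norm ` {z'. Fvec f z' = Fvec f z}" "R + 1"] by auto
    have "f i z' = f i z" using z'(1) by (simp add: Fvec_def vec_eq_iff)
    moreover have "f i 0 + df i 0 \<bullet> (z' - 0) \<le> f i z'" by (rule convex_on_gradient_inequality[OF conv grad])
    moreover have "\<bar>df i 0 \<bullet> z'\<bar> \<le> norm (df i 0) * (R + 1)"
      using Cauchy_Schwarz_ineq2[of "df i 0" z'] z'(2) by (smt (verit) mult_left_mono norm_ge_zero)
    ultimately show ?thesis using z_le[of i] by simp
  qed
  then show ?thesis by (intro exI[of _ "\<lambda>i. f i 0 - norm (df i 0) * (R + 1)"]) auto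
qed

definition "energy_inf = Inf (energy ` {t0..})"
definition "gap_inf i = Inf ((\<lambda>t. f i (x t) - slope_integral t) ` {t0..})"

lemma bdd_below_energy: "bdd_below (energy ` {t0..})"
proof -
  obtain L where L: "\<And>i t. t \<ge> t0 \<Longrightarrow> L i \<le> f i (x t)" using f_along_bounded_below by blast
  fix i :: 'm
  have "L i - f i x0 \<le> energy t" if "t \<ge> t0" for t
    using slope_integral_minus_f_mono[of t0 t i] slope_integral_le_energy[OF that] L[OF that, of i] that
    by (simp add: slope_integral_def init)
  then show ?thesis by (intro bdd_belowI2) auto
qed

lemma bdd_below_gap: "bdd_below ((\<lambda>t. f i (x t) - slope_integral t) ` {t0..})"
proof -
  obtain L where L: "\<And>i t. t \<ge> t0 \<Longrightarrow> L i \<le> f i (x t)" using f_along_bounded_below by blast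
  have "L i - energy t0 \<le> f i (x t) - slope_integral t" if "t \<ge> t0" for t
    using L[OF that, of i] slope_integral_le_energy[OF that] energy_antimono[of t0 t] that by simp
  then show ?thesis by (intro bdd_belowI2) auto
qed

lemma energy_inf_le: "t \<ge> t0 \<Longrightarrow> energy_inf \<le> energy t"
  unfolding energy_inf_def by (rule cInf_lower[OF _ bdd_below_energy]) auto

lemma gap_inf_le: "t \<ge> t0 \<Longrightarrow> gap_inf i \<le> f i (x t) - slope_integral t"
  unfolding gap_inf_def by (rule cInf_lower[OF _ bdd_below_gap]) auto

lemma eventually_energy_less: "\<eta> > 0 \<Longrightarrow> eventually (\<lambda>t. energy t < energy_inf + \<eta>) at_top"
proof -
  assume "\<eta> > 0"
  then obtain T where "T \<ge> t0" "energy T < energy_inf + \<eta>"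
    using cInf_lessD[of "energy ` {t0..}" "energy_inf + \<eta>"] by (auto simp: energy_inf_def)
  then show ?thesis
    using energy_antimono[of T] by (auto simp: eventually_at_top_linorder intro!: exI[of _ T]
        intro: le_less_trans)
qed

lemma eventually_gap_less: "\<eta> > 0 \<Longrightarrow> eventually (\<lambda>t. f i (x t) - slope_integral t < gap_inf i + \<eta>) at_top"
proof -
  assume "\<eta> > 0"
  then obtain T where "T \<ge> t0" "f i (x T) - slope_integral T < gap_inf i + \<eta>"
    using cInf_lessD[of "(\<lambda>t. f i (x t) - slope_integral t) ` {t0..}" "gap_inf i + \<eta>"]
    by (auto simp: gap_inf_def)
  then show ?thesis
    using slope_integral_minus_f_mono[of T _ i] unfolding eventually_at_top_linorder
    by (intro exI[of _ T] allI impI) (smt (verit))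
qed

definition "anchor = (SOME z. z \<in> Sset f (\<chi> i. energy_inf + gap_inf i))"

lemma f_anchor_le: "f i anchor \<le> energy_inf + gap_inf i"
proof (rule field_le_epsilon)
  define w where "w = (\<chi> i. energy_inf + gap_inf i)"
  have anchor: "anchor \<in> Sset f w" unfolding anchor_def w_def using A4_nonempty by (simp add: some_in_eq)
  fix \<eta> :: real assume "\<eta> > 0"
  have "eventually (\<lambda>t. t \<ge> t0 \<and> energy t < energy_inf + \<eta> / 2
      \<and> (\<forall>j. f j (x t) - slope_integral t < gap_inf j + \<eta> / 2)) at_top"
    using \<open>\<eta> > 0\<close> by (intro eventually_conj eventually_ge_at_top eventually_energy_less eventually_all_finite
        eventually_gap_less) auto
  then obtain T where T: "T \<ge> t0" "energy T < energy_inf + \<eta> / 2"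
    "\<And>j. f j (x T) - slope_integral T < gap_inf j + \<eta> / 2"
    by (auto simp: eventually_at_top_linorder)
  have "f j (x T) - w $ j < \<eta>" for j
    using T(2) T(3)[of j] slope_integral_le_energy[OF T(1)] by (simp add: w_def)
  then have "(MAX j. f j (x T) - w $ j) < \<eta>" by (simp add: Max_less_iff)
  moreover have "(MAX j. f j anchor - w $ j) \<le> (MAX j. f j (x T) - w $ j)"
    using anchor unfolding Sset_def by blast
  moreover have "f i anchor - w $ i \<le> (MAX j. f j anchor - w $ j)" by (rule Max_ge) auto
  ultimately have "f i anchor - w $ i < \<eta>" by linarith
  then show "f i anchor \<le> energy_inf + gap_inf i + \<eta>" by (simp add: w_def)
qed

lemma slope_integral_le_min_gap:
  assumes "t \<ge> t0"
  shows "slope_integral t - energy_inf \<le> min_gap anchor t"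
proof -
  have "slope_integral t - energy_inf \<le> f i (x t) - f i anchor" for i
    using f_anchor_le[of i] gap_inf_le[OF assms, of i] by simp
  then show ?thesis unfolding min_gap_def by (simp add: Min_ge_iff)
qed


definition "anchor_rate t = - damping t * ((x t - anchor) \<bullet> x' t) - tikhonov t * (x t \<bullet> (x t - anchor))
  - min_gap anchor t"
definition "anchor_coupling t = (x t - anchor) \<bullet> x' t"
definition "anchor_defect t = anchor_coupling t - integral {t0..t} (\<lambda>r. (norm (x' r))\<^sup>2 + anchor_rate r)"

lemma continuous_on_anchor_rate: "continuous_on {t0..} anchor_rate"
  unfolding anchor_rate_def[abs_def]
  by (intro continuous_intros continuous_on_damping continuous_on_tikhonov continuous_on_min_gap
      continuous_on_x x'_cont)

lemma continuous_on_anchor_coupling: "continuous_on {t0..} anchor_coupling"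
  unfolding anchor_coupling_def[abs_def] by (intro continuous_intros continuous_on_x x'_cont)

lemma continuous_on_anchor_defect: "t0 \<le> T1 \<Longrightarrow> continuous_on {T1..T} anchor_defect"
  unfolding anchor_defect_def[abs_def]
  by (intro continuous_intros continuous_on_subset[OF continuous_on_anchor_coupling]
      continuous_on_subset[OF indefinite_integral_continuous_1[of _ t0 T]]
      integrable_on_if_continuous_on_tail continuous_on_anchor_rate x'_cont) auto

lemma anchor_defect_antimono:
  assumes "t0 \<le> s" "s \<le> t"
  shows "anchor_defect t \<le> anchor_defect s"
proof -
  define J where "J r = (norm (x' r))\<^sup>2 + anchor_rate r" for r
  obtain N where "negligible N" and N: "\<And>r. r \<ge> t0 \<Longrightarrow> r \<notin> N \<Longrightarrow> x'' r \<bullet> (x r - anchor) \<le> anchor_rate r"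
    unfolding anchor_rate_def by (rule equation_off_null_set) blast
  have J_int: "J integrable_on {t0..t}"
    unfolding J_def[abs_def]
    by (intro integrable_on_if_continuous_on_tail continuous_intros continuous_on_anchor_rate x'_cont) simp
  have "(x t - anchor) \<bullet> x' t - integral {s..t} J \<le> (x s - anchor) \<bullet> x' s"
    unfolding J_def
  proof (rule inner_defect_antimono[OF assms(2) _ _ x''_inner_has_integral _ _ \<open>negligible N\<close>])
    show "(x has_vector_derivative x' r) (at r within {s..t})" if "r \<in> {s..t}" for r
      using x_deriv_subinterval assms that by blast
    show "continuous_on {s..t} x'" "continuous_on {s..t} anchor_rate"
      using assms by (auto intro: continuous_on_subset[OF x'_cont] continuous_on_subset[OF continuous_on_anchor_rate])
    show "(\<lambda>r. norm (x'' r)) integrable_on {s..t}" by (rule x''_norm_integrable_subinterval[OF assms])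
    show "x'' r \<bullet> (x r - anchor) \<le> anchor_rate r" if "r \<in> {s..t} - N" for r using N that assms by auto
  qed (use assms in auto)
  moreover have "integral {t0..t} J - integral {t0..s} J = integral {s..t} J"
    by (rule integral_diff_initial_segments[OF J_int]) (use assms in auto)
  ultimately show ?thesis by (simp add: anchor_defect_def anchor_coupling_def J_def[abs_def])
qed

text \<open>\<open>nu\<close> is chosen so that \<open>kappa' + 2 nu = (q + 1) \<alpha>\<close>, which makes the coupling terms of
  \<open>lyap_rate\<close> collapse (see \<open>lyap_rate_eq\<close>).\<close>
definition "kappa t = (q + 1) * t powr q"
definition "kappa' t = (q + 1) * (q * t powr (q - 1))"
definition "nu t = (q + 1) / 2 * (\<alpha> - q * t powr (q - 1))"
definition "nu' t = (q + 1) / 2 * (- (q * ((q - 1) * t powr (q - 1 - 1))))"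

definition "lyap t = t powr (q + 1) * (energy t - energy_inf) + kappa t * anchor_coupling t
  + nu t * (norm (x t - anchor))\<^sup>2"

text \<open>The formal derivative of \<open>lyap\<close>, with the derivative of \<open>anchor_coupling\<close>
  replaced by its a.e.\ upper bound \<open>|x'|\<^sup>2 + anchor_rate\<close>.\<close>
definition "lyap_rate t = (q + 1) * t powr q * (energy t - energy_inf) + t powr (q + 1) * energy_rate t
  + kappa' t * anchor_coupling t + kappa t * ((norm (x' t))\<^sup>2 + anchor_rate t)
  + nu' t * (norm (x t - anchor))\<^sup>2 + nu t * (2 * anchor_coupling t)"

definition "lyap_smooth t = t powr (q + 1) * (energy t - energy_inf)
  + kappa t * integral {t0..t} (\<lambda>r. (norm (x' r))\<^sup>2 + anchor_rate r) + nu t * (norm (x t - anchor))\<^sup>2"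

lemma lyap_eq_smooth_plus_defect: "lyap t = lyap_smooth t + kappa t * anchor_defect t"
  by (simp add: lyap_def lyap_smooth_def anchor_defect_def algebra_simps)

lemma has_real_derivative_kappa: "\<tau> > 0 \<Longrightarrow> (kappa has_real_derivative kappa' \<tau>) (at \<tau> within S)"
  unfolding kappa_def[abs_def] kappa'_def
  by (intro DERIV_cmult has_field_derivative_at_within[OF has_real_derivative_powr])

lemma has_vector_derivative_lyap_smooth:
  assumes "t0 \<le> T1" "\<tau> \<in> {T1..T}"
  shows "(lyap_smooth has_vector_derivative lyap_rate \<tau> - kappa' \<tau> * anchor_defect \<tau>) (at \<tau> within {T1..T})"
proof -
  have "\<tau> > 0" "t0 \<le> \<tau>" using assms t0 by auto
  have sub: "{T1..T} \<subseteq> {t0..T}" using assms by auto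
  have energy: "(energy has_real_derivative energy_rate \<tau>) (at \<tau> within {T1..T})"
    using has_vector_derivative_within_subset[OF has_vector_derivative_energy sub] assms
    by (simp add: has_real_derivative_iff_has_vector_derivative)
  have "continuous_on {t0..} (\<lambda>r. (norm (x' r))\<^sup>2 + anchor_rate r)"
    by (intro continuous_intros continuous_on_anchor_rate x'_cont)
  then have "((\<lambda>t. integral {t0..t} (\<lambda>r. (norm (x' r))\<^sup>2 + anchor_rate r)) has_vector_derivative
      (norm (x' \<tau>))\<^sup>2 + anchor_rate \<tau>) (at \<tau> within {t0..T})"
    using assms by (intro integral_has_vector_derivative) (auto elim: continuous_on_subset)
  then have integral: "((\<lambda>t. integral {t0..t} (\<lambda>r. (norm (x' r))\<^sup>2 + anchor_rate r)) has_real_derivative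
      (norm (x' \<tau>))\<^sup>2 + anchor_rate \<tau>) (at \<tau> within {T1..T})"
    using has_vector_derivative_within_subset[OF _ sub]
    by (simp add: has_real_derivative_iff_has_vector_derivative)
  have "((\<lambda>t. x t - anchor) has_vector_derivative x' \<tau>) (at \<tau> within {T1..T})"
    using x_deriv_subinterval[of T1 \<tau> T] assms
    by (auto intro: has_vector_derivative_diff[where g' = 0, simplified])
  from has_vector_derivative_norm_power2[OF this]
  have dist: "((\<lambda>t. (norm (x t - anchor))\<^sup>2) has_real_derivative 2 * anchor_coupling \<tau>) (at \<tau> within {T1..T})"
    by (simp add: anchor_coupling_def has_real_derivative_iff_has_vector_derivative)
  have "(nu has_real_derivative nu' \<tau>) (at \<tau> within {T1..T})"
    unfolding nu_def[abs_def] nu'_def using \<open>\<tau> > 0\<close>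
    by (intro DERIV_cmult DERIV_diff[of "\<lambda>_. \<alpha>" 0, simplified] DERIV_const
        has_field_derivative_at_within[OF has_real_derivative_powr])
  then have "(lyap_smooth has_real_derivative
      ((q + 1) * \<tau> powr (q + 1 - 1) * (energy \<tau> - energy_inf) + energy_rate \<tau> * \<tau> powr (q + 1))
      + (kappa' \<tau> * integral {t0..\<tau>} (\<lambda>r. (norm (x' r))\<^sup>2 + anchor_rate r)
         + ((norm (x' \<tau>))\<^sup>2 + anchor_rate \<tau>) * kappa \<tau>)
      + (nu' \<tau> * (norm (x \<tau> - anchor))\<^sup>2 + 2 * anchor_coupling \<tau> * nu \<tau>)) (at \<tau> within {T1..T})"
    unfolding lyap_smooth_def[abs_def] using \<open>\<tau> > 0\<close>
    by (intro DERIV_add DERIV_mult DERIV_diff[of energy _ _ _ "\<lambda>_. energy_inf" 0, simplified] DERIV_const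
        has_field_derivative_at_within[OF has_real_derivative_powr] has_real_derivative_kappa
        energy integral dist)
  then show ?thesis
    using \<open>\<tau> > 0\<close>
    by (simp add: has_real_derivative_iff_has_vector_derivative lyap_rate_def anchor_defect_def algebra_simps)
qed

lemma integrable_kappa'_anchor_defect:
  "t0 \<le> T1 \<Longrightarrow> (\<lambda>t. kappa' t * anchor_defect t) integrable_on {T1..T}"
  unfolding kappa'_def[abs_def] using t0
  by (intro integrable_continuous_interval continuous_intros continuous_on_anchor_defect) auto

lemma lyap_smooth_has_integral:
  assumes "t0 \<le> T1" "T1 \<le> T"
  shows "((\<lambda>t. lyap_rate t - kappa' t * anchor_defect t) has_integral (lyap_smooth T - lyap_smooth T1)) {T1..T}"
  by (rule fundamental_theorem_of_calculus[OF assms(2) has_vector_derivative_lyap_smooth[OF assms(1)]])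

lemma integrable_lyap_rate:
  assumes "t0 \<le> T1" "T1 \<le> T"
  shows "lyap_rate integrable_on {T1..T}"
  using integrable_add[OF has_integral_integrable[OF lyap_smooth_has_integral[OF assms]]
      integrable_kappa'_anchor_defect[OF assms(1)]]
  by simp

lemma lyap_increment_le:
  assumes "t0 \<le> T1" "T1 \<le> T"
  shows "lyap T - lyap T1 \<le> integral {T1..T} lyap_rate"
proof -
  have defect: "kappa T * anchor_defect T - kappa T1 * anchor_defect T1
      \<le> integral {T1..T} (\<lambda>t. kappa' t * anchor_defect t)"
  proof (rule mult_antimono_increment_le_integral[OF assms(2)])
    show "(kappa has_vector_derivative kappa' t) (at t within {T1..T})" if "t \<in> {T1..T}" for t
      using has_real_derivative_kappa[of t] that assms t0
      by (simp add: has_real_derivative_iff_has_vector_derivative)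
    show "continuous_on {T1..T} kappa'"
      unfolding kappa'_def[abs_def] using assms t0 by (intro continuous_intros) auto
    show "kappa t \<ge> 0" for t using q by (simp add: kappa_def)
    show "continuous_on {T1..T} anchor_defect" by (rule continuous_on_anchor_defect[OF assms(1)])
    show "anchor_defect t \<le> anchor_defect s" if "T1 \<le> s" "s \<le> t" "t \<le> T" for s t
      using anchor_defect_antimono that assms by auto
  qed
  have "integral {T1..T} (\<lambda>t. lyap_rate t - kappa' t * anchor_defect t)
      + integral {T1..T} (\<lambda>t. kappa' t * anchor_defect t) = integral {T1..T} lyap_rate"
    using has_integral_integrable[OF lyap_smooth_has_integral[OF assms]]
      integrable_kappa'_anchor_defect[OF assms(1)]
    by (subst integral_add[symmetric]) auto
  then show ?thesis
    using defect integral_unique[OF lyap_smooth_has_integral[OF assms]]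
      lyap_eq_smooth_plus_defect[of T] lyap_eq_smooth_plus_defect[of T1]
    by linarith
qed


lemma lyap_rate_eq:
  assumes "t \<ge> t0"
  shows "lyap_rate t = (q + 1) * t powr q * (energy t - energy_inf - min_gap anchor t)
    - \<alpha> * t * (norm (x' t))\<^sup>2 - p * \<beta> / 2 * t powr (q - p) * (norm (x t))\<^sup>2
    + (q + 1) * t powr q * (norm (x' t))\<^sup>2 - (q + 1) * \<beta> * t powr (q - p) * (x t \<bullet> (x t - anchor))
    + (q + 1) * q * (1 - q) / 2 * t powr (q - 2) * (norm (x t - anchor))\<^sup>2"
proof -
  have "t > 0" using assms t0 by simp
  define P Q R where "P = t powr q" and "Q = t powr p" and "R = t powr (q - p)"
  define U X Y where "U = (norm (x' t))\<^sup>2" and "X = (norm (x t))\<^sup>2" and "Y = anchor_coupling t"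
  define G M where "G = x t \<bullet> (x t - anchor)" and "M = min_gap anchor t"
  have "P > 0" "Q > 0" using \<open>t > 0\<close> by (simp_all add: P_def Q_def)
  have R: "R = P / Q" using \<open>t > 0\<close> by (simp add: P_def Q_def R_def powr_diff)
  have e1: "t powr (q + 1) * energy_rate t = - \<alpha> * t * U - (p * \<beta> / 2) * R * X"
  proof -
    have "t powr (q + 1) = P * t" "t powr (p + 1) = Q * t"
      using \<open>t > 0\<close> by (simp_all add: P_def Q_def powr_add)
    then show ?thesis
      unfolding energy_rate_def damping_def tikhonov'_def R U_def[symmetric] X_def[symmetric]
        P_def[symmetric] using \<open>P > 0\<close> \<open>Q > 0\<close> \<open>t > 0\<close> by (simp add: field_simps)
  qed
  have e2: "kappa t * (U + anchor_rate t) = (q + 1) * P * U - (q + 1) * \<alpha> * Y - (q + 1) * \<beta> * R * G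
      - (q + 1) * P * M"
    unfolding kappa_def anchor_rate_def damping_def tikhonov_def R P_def[symmetric] Q_def[symmetric]
      Y_def G_def M_def anchor_coupling_def using \<open>P > 0\<close> \<open>Q > 0\<close> by (simp add: field_simps)
  have e3: "kappa' t * Y + nu t * (2 * Y) = (q + 1) * \<alpha> * Y"
  proof -
    have "t powr (q - 1) = P / t" using \<open>t > 0\<close> by (simp add: P_def powr_diff)
    then show ?thesis unfolding kappa'_def nu_def using \<open>t > 0\<close> by (simp add: field_simps)
  qed
  have e4: "nu' t = (q + 1) * q * (1 - q) / 2 * t powr (q - 2)"
    unfolding nu'_def by (simp add: field_simps)
  have "lyap_rate t = (q + 1) * P * (energy t - energy_inf) + t powr (q + 1) * energy_rate t
      + (kappa' t * Y + nu t * (2 * Y)) + kappa t * (U + anchor_rate t) + nu' t * (norm (x t - anchor))\<^sup>2"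
    unfolding lyap_rate_def P_def Y_def U_def by (simp add: algebra_simps)
  also have "\<dots> = (q + 1) * P * (energy t - energy_inf - M) - \<alpha> * t * U - p * \<beta> / 2 * R * X
      + (q + 1) * P * U - (q + 1) * \<beta> * R * G + (q + 1) * q * (1 - q) / 2 * t powr (q - 2) * (norm (x t - anchor))\<^sup>2"
    unfolding e1 e2 e3 e4 by (simp add: algebra_simps)
  finally show ?thesis by (simp add: P_def R_def U_def X_def G_def M_def)
qed


lemma lyap_rate_le:
  assumes "t \<ge> t0"
    and damping_large: "3 * (q + 1) / 2 * t powr q \<le> \<alpha> / 2 * t"
    and tikhonov_large: "(q + 1) * q * (1 - q) * t powr (q - 2) \<le> p * \<beta> / 2 * t powr (q - p)"
  shows "lyap_rate t \<le> - (\<alpha> / 2) * t * (norm (x' t))\<^sup>2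
    + (norm anchor)\<^sup>2 * ((q + 1) * \<beta> / 2 * t powr (q - p) + (q + 1) * q * (1 - q) * t powr (q - 2))"
proof -
  have "t > 0" using assms t0 by simp
  define P R S where "P = t powr q" and "R = t powr (q - p)" and "S = t powr (q - 2)"
  define U X Z where "U = (norm (x' t))\<^sup>2" and "X = (norm (x t))\<^sup>2" and "Z = (norm anchor)\<^sup>2"
  define G N where "G = x t \<bullet> (x t - anchor)" and "N = (norm (x t - anchor))\<^sup>2"
  have "P > 0" "R > 0" "S \<ge> 0" "U \<ge> 0" "X \<ge> 0" "Z \<ge> 0" using \<open>t > 0\<close> by (simp_all add: P_def R_def S_def U_def X_def Z_def)
  have "energy t - energy_inf - min_gap anchor t \<le> U / 2 + \<beta> * R / P * X / 2"
  proof -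
    have "t powr p = P / R" using \<open>t > 0\<close> by (simp add: P_def R_def powr_diff)
    then show ?thesis using slope_integral_le_min_gap[OF assms(1)]
      by (simp add: energy_def tikhonov_def U_def X_def)
  qed
  then have "(q + 1) * P * (energy t - energy_inf - min_gap anchor t) \<le> (q + 1) * P * (U / 2 + \<beta> * R / P * X / 2)"
    using \<open>P > 0\<close> q by (intro mult_left_mono) auto
  also have "\<dots> = (q + 1) * P * (U / 2) + (q + 1) * \<beta> * R * X / 2"
    using \<open>P > 0\<close> by (simp add: field_simps)
  finally have b1: "(q + 1) * P * (energy t - energy_inf - min_gap anchor t)
      \<le> (q + 1) * P * (U / 2) + (q + 1) * \<beta> * R * X / 2" .
  have "x t \<bullet> anchor \<le> X / 2 + Z / 2"
  proof -
    have "0 \<le> (norm (x t - anchor))\<^sup>2" by simp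
    also have "\<dots> = X - 2 * (x t \<bullet> anchor) + Z"
      by (simp add: X_def Z_def power2_norm_eq_inner inner_diff_left inner_diff_right inner_commute)
    finally show ?thesis by simp
  qed
  then have "G \<ge> X / 2 - Z / 2" by (simp add: G_def inner_diff_right X_def power2_norm_eq_inner)
  then have b2: "(q + 1) * \<beta> * R * (X / 2 - Z / 2) \<le> (q + 1) * \<beta> * R * G"
    using \<open>R > 0\<close> q \<beta> by (intro mult_left_mono) auto
  have "N \<le> (norm (x t) + norm anchor)\<^sup>2" unfolding N_def by (intro power_mono norm_triangle_ineq4) auto
  also have "\<dots> \<le> 2 * X + 2 * Z" unfolding X_def Z_def by (smt (verit) power2_sum sum_squares_bound)
  finally have b3: "(q + 1) * q * (1 - q) / 2 * S * N \<le> (q + 1) * q * (1 - q) / 2 * S * (2 * X + 2 * Z)"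
    using q q_lt_1 \<open>S \<ge> 0\<close> by (intro mult_left_mono) auto
  have b4: "3 * (q + 1) / 2 * P * U \<le> \<alpha> / 2 * t * U"
    using damping_large \<open>U \<ge> 0\<close> by (intro mult_right_mono) (auto simp: P_def)
  have b5: "(q + 1) * q * (1 - q) * S * X \<le> p * \<beta> / 2 * R * X"
    using tikhonov_large \<open>X \<ge> 0\<close> by (intro mult_right_mono) (auto simp: S_def R_def)
  have "lyap_rate t \<le> (q + 1) * P * (U / 2) + (q + 1) * \<beta> * R * X / 2 - \<alpha> * t * U - p * \<beta> / 2 * R * X
      + (q + 1) * P * U - (q + 1) * \<beta> * R * (X / 2 - Z / 2) + (q + 1) * q * (1 - q) / 2 * S * (2 * X + 2 * Z)"
    using lyap_rate_eq[OF assms(1)] b1 b2 b3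
    unfolding P_def[symmetric] R_def[symmetric] S_def[symmetric] U_def[symmetric] X_def[symmetric]
      G_def[symmetric] N_def[symmetric]
    by linarith
  also have "\<dots> = 3 * (q + 1) / 2 * P * U - \<alpha> * t * U - p * \<beta> / 2 * R * X + (q + 1) * q * (1 - q) * S * X
      + Z * ((q + 1) * \<beta> / 2 * R + (q + 1) * q * (1 - q) * S)"
    by (simp add: field_simps)
  also have "\<dots> \<le> - (\<alpha> / 2) * t * U + Z * ((q + 1) * \<beta> / 2 * R + (q + 1) * q * (1 - q) * S)"
    using b4 b5 by linarith
  finally show ?thesis by (simp add: U_def Z_def R_def S_def)
qed

lemma lyap_ge:
  assumes "t \<ge> t0" and damping_large: "q * t powr (q - 1) \<le> \<alpha> / 2"
  shows "- ((q + 1) / \<alpha>) * t powr (2 * q) * (norm (x' t))\<^sup>2 \<le> lyap t"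
proof -
  have "t > 0" using assms t0 by simp
  define n u k v where "n = norm (x t - anchor)" and "u = norm (x' t)" and "k = kappa t" and "v = nu t"
  have "k \<ge> 0" using q by (simp add: k_def kappa_def)
  have v: "v \<ge> (q + 1) * \<alpha> / 4"
  proof -
    have "(q + 1) / 2 * (\<alpha> / 2) \<le> (q + 1) / 2 * (\<alpha> - q * t powr (q - 1))"
      using damping_large q by (intro mult_left_mono) auto
    then show ?thesis by (simp add: v_def nu_def)
  qed
  then have "v > 0" using \<alpha> q by (smt (verit) divide_pos_pos mult_pos_pos)
  have "\<bar>anchor_coupling t\<bar> \<le> n * u"
    unfolding anchor_coupling_def n_def u_def by (rule Cauchy_Schwarz_ineq2)
  then have coupling: "- (k * (n * u)) \<le> k * anchor_coupling t"
    using \<open>k \<ge> 0\<close> by (metis abs_le_D2 minus_le_iff minus_mult_right mult_left_mono)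
  have "0 \<le> (2 * v * n - k * u)\<^sup>2" by simp
  also have "\<dots> = 4 * v * (v * n\<^sup>2 - k * (n * u)) + k\<^sup>2 * u\<^sup>2" by (simp add: power2_eq_square algebra_simps)
  finally have square: "- (k\<^sup>2 * u\<^sup>2 / (4 * v)) \<le> v * n\<^sup>2 - k * (n * u)"
    using \<open>v > 0\<close> by (simp add: field_simps)
  have "k\<^sup>2 = (q + 1)\<^sup>2 * t powr (2 * q)"
    unfolding k_def kappa_def using \<open>t > 0\<close> by (simp add: power_mult_distrib powr_add[symmetric] power2_eq_square)
  then have "k\<^sup>2 * u\<^sup>2 / (4 * v) = (q + 1)\<^sup>2 * t powr (2 * q) * u\<^sup>2 / (4 * v)" by simp
  also have "\<dots> \<le> (q + 1)\<^sup>2 * t powr (2 * q) * u\<^sup>2 / (4 * ((q + 1) * \<alpha> / 4))"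
    using v \<open>v > 0\<close> \<alpha> q by (intro divide_left_mono mult_pos_pos) auto
  also have "\<dots> = ((q + 1) / \<alpha>) * t powr (2 * q) * u\<^sup>2"
    using q \<alpha> by (simp add: power2_eq_square)
  finally have "k\<^sup>2 * u\<^sup>2 / (4 * v) \<le> ((q + 1) / \<alpha>) * t powr (2 * q) * u\<^sup>2" .
  moreover have "t powr (q + 1) * (energy t - energy_inf) \<ge> 0" using energy_inf_le[OF assms(1)] by simp
  moreover have "lyap t = t powr (q + 1) * (energy t - energy_inf) + k * anchor_coupling t + v * n\<^sup>2"
    by (simp add: lyap_def k_def v_def n_def)
  ultimately show ?thesis using coupling square unfolding u_def by linarith
qed

lemma weighted_kinetic_integral_le_powr:
  assumes "t0 \<le> T1" "T1 \<le> T"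
  shows "integral {T1..T} (\<lambda>s. s * (norm (x' s))\<^sup>2) \<le> (energy T1 - energy_inf) / \<alpha> * T powr (1 + q)"
proof -
  define g where "g s = damping s * (norm (x' s))\<^sup>2" for s
  have pos: "s > 0" if "s \<in> {T1..T}" for s using that assms t0 by auto
  have g_int: "g integrable_on {T1..T}"
    unfolding g_def[abs_def] using assms(1)
    by (intro integrable_on_if_continuous_on_tail continuous_intros continuous_on_damping x'_cont)
  have energy: "(energy_rate has_integral (energy T - energy T1)) {T1..T}"
    by (rule fundamental_theorem_of_calculus[OF assms(2)])
      (use assms in \<open>auto intro: has_vector_derivative_within_subset[OF has_vector_derivative_energy]\<close>)
  have "integral {T1..T} g \<le> integral {T1..T} (\<lambda>s. - energy_rate s)"
  proof (rule integral_le[OF g_int integrable_neg[OF has_integral_integrable[OF energy]]])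
    show "g s \<le> - energy_rate s" if "s \<in> {T1..T}" for s
      using energy_rate_le_damping[of s] that assms by (simp add: g_def)
  qed
  also have "\<dots> \<le> energy T1 - energy_inf"
    using integral_unique[OF energy] energy_inf_le[of T] assms by (simp add: integral_neg)
  finally have g_bound: "integral {T1..T} g \<le> energy T1 - energy_inf" .
  have "integral {T1..T} (\<lambda>s. s * (norm (x' s))\<^sup>2) \<le> integral {T1..T} (\<lambda>s. T powr (1 + q) / \<alpha> * g s)"
  proof (rule integral_le)
    show "(\<lambda>s. s * (norm (x' s))\<^sup>2) integrable_on {T1..T}"
      using assms(1) by (intro integrable_on_if_continuous_on_tail continuous_intros x'_cont)
    show "(\<lambda>s. T powr (1 + q) / \<alpha> * g s) integrable_on {T1..T}" by (rule integrable_on_mult_right[OF g_int])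
    fix s assume s: "s \<in> {T1..T}"
    have "s * (norm (x' s))\<^sup>2 = s powr (1 + q) / \<alpha> * g s"
      using pos[OF s] \<alpha> by (simp add: g_def damping_def powr_add field_simps)
    also have "\<dots> \<le> T powr (1 + q) / \<alpha> * g s"
      using s pos[OF s] q \<alpha> damping_pos[OF pos[OF s]]
      by (intro mult_right_mono divide_right_mono powr_mono2) (auto simp: g_def)
    finally show "s * (norm (x' s))\<^sup>2 \<le> T powr (1 + q) / \<alpha> * g s" .
  qed
  also have "\<dots> = T powr (1 + q) / \<alpha> * integral {T1..T} g" by simp
  also have "\<dots> \<le> T powr (1 + q) / \<alpha> * (energy T1 - energy_inf)"
    using g_bound \<alpha> by (intro mult_left_mono) auto
  finally show ?thesis by (simp add: field_simps)
qed

definition "large_time T1 \<longleftrightarrow> t0 \<le> T1 \<and> (\<forall>t\<ge>T1. 3 * (q + 1) / 2 * t powr q \<le> \<alpha> / 2 * t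
    \<and> (q + 1) * q * (1 - q) * t powr (q - 2) \<le> p * \<beta> / 2 * t powr (q - p)
    \<and> q * t powr (q - 1) \<le> \<alpha> / 2)"

lemma large_timeD:
  assumes "large_time T1" "t \<ge> T1"
  shows "t \<ge> t0" "3 * (q + 1) / 2 * t powr q \<le> \<alpha> / 2 * t"
    "(q + 1) * q * (1 - q) * t powr (q - 2) \<le> p * \<beta> / 2 * t powr (q - p)"
    "q * t powr (q - 1) \<le> \<alpha> / 2"
  using assms by (auto simp: large_time_def)

text \<open>The damping eventually dominates the coupling terms of the Lyapunov function; this is
  where \<open>q + 1 < p\<close> (hence \<open>p < 2\<close> and \<open>q < 1\<close>) is used.\<close>
lemma ex_large_time: obtains T1 where "large_time T1"
proof -
  have "eventually (\<lambda>t. t0 \<le> t \<and> 3 * (q + 1) / 2 * t powr q \<le> \<alpha> / 2 * t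
    \<and> (q + 1) * q * (1 - q) * t powr (q - 2) \<le> p * \<beta> / 2 * t powr (q - p)
    \<and> q * t powr (q - 1) \<le> \<alpha> / 2) at_top"
    using q q_lt_1 p p_pos \<alpha> \<beta> by (intro eventually_conj eventually_ge_at_top) real_asymp+
  then obtain T1 where "\<And>t. t \<ge> T1 \<Longrightarrow> t0 \<le> t \<and> 3 * (q + 1) / 2 * t powr q \<le> \<alpha> / 2 * t
    \<and> (q + 1) * q * (1 - q) * t powr (q - 2) \<le> p * \<beta> / 2 * t powr (q - p)
    \<and> q * t powr (q - 1) \<le> \<alpha> / 2"
    unfolding eventually_at_top_linorder by blast
  then show thesis by (intro that[of T1]) (auto simp: large_time_def)
qed

lemma lyap_decrease:
  assumes "large_time T1"
  shows "\<exists>C. \<forall>T\<ge>T1. lyap T - lyap T1 \<le> C - \<alpha> / 2 * integral {T1..T} (\<lambda>s. s * (norm (x' s))\<^sup>2)"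
proof -
  define \<phi> where "\<phi> s = s * (norm (x' s))\<^sup>2" for s
  define c1 c2 where "c1 = (q + 1) * \<beta> / 2 * (norm anchor)\<^sup>2" and "c2 = (q + 1) * q * (1 - q) * (norm anchor)\<^sup>2"
  have "t0 \<le> T1" using assms by (simp add: large_time_def)
  then have "T1 > 0" using t0 by simp
  have "q - p < -1" "q - 2 < -1" using qp q_lt_1 by auto
  have "c1 \<ge> 0" "c2 \<ge> 0" using q q_lt_1 \<beta> by (simp_all add: c1_def c2_def)
  have "lyap T - lyap T1 \<le> (c1 * (T1 powr (q - p + 1) / - (q - p + 1)) + c2 * (T1 powr (q - 2 + 1) / - (q - 2 + 1)))
      - \<alpha> / 2 * integral {T1..T} \<phi>" if "T \<ge> T1" for T
  proof -
    have \<phi>_int: "\<phi> integrable_on {T1..T}"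
      unfolding \<phi>_def[abs_def] using \<open>t0 \<le> T1\<close>
      by (intro integrable_on_if_continuous_on_tail continuous_intros x'_cont)
    note powr_int = integral_powr_le[OF \<open>q - p < -1\<close> \<open>T1 > 0\<close> that]
      integral_powr_le[OF \<open>q - 2 < -1\<close> \<open>T1 > 0\<close> that]
    have "lyap T - lyap T1 \<le> integral {T1..T} lyap_rate" by (rule lyap_increment_le[OF \<open>t0 \<le> T1\<close> that])
    also have "\<dots> \<le> integral {T1..T} (\<lambda>s. - (\<alpha> / 2) * \<phi> s + (c1 * s powr (q - p) + c2 * s powr (q - 2)))"
    proof (rule integral_le)
      show "lyap_rate integrable_on {T1..T}" by (rule integrable_lyap_rate[OF \<open>t0 \<le> T1\<close> that])
      show "(\<lambda>s. - (\<alpha> / 2) * \<phi> s + (c1 * s powr (q - p) + c2 * s powr (q - 2))) integrable_on {T1..T}"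
        using \<phi>_int powr_int by (intro integrable_add integrable_on_mult_right) auto
      show "lyap_rate s \<le> - (\<alpha> / 2) * \<phi> s + (c1 * s powr (q - p) + c2 * s powr (q - 2))" if "s \<in> {T1..T}" for s
      proof -
        have "s \<ge> T1" using that by simp
        from lyap_rate_le[OF large_timeD(1-3)[OF assms this]] show ?thesis
          by (simp add: \<phi>_def c1_def c2_def algebra_simps)
      qed
    qed
    also have "\<dots> = integral {T1..T} (\<lambda>s. - (\<alpha> / 2) * \<phi> s)
        + integral {T1..T} (\<lambda>s. c1 * s powr (q - p) + c2 * s powr (q - 2))"
      by (rule integral_add integrable_on_mult_right[OF \<phi>_int] integrable_add
          integrable_on_mult_right powr_int)+
    also have "integral {T1..T} (\<lambda>s. c1 * s powr (q - p) + c2 * s powr (q - 2))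
        = c1 * integral {T1..T} (\<lambda>s. s powr (q - p)) + c2 * integral {T1..T} (\<lambda>s. s powr (q - 2))"
      using integral_add[OF integrable_on_mult_right integrable_on_mult_right, OF powr_int(1) powr_int(3)]
      by simp
    also have "\<dots> \<le> c1 * (T1 powr (q - p + 1) / - (q - p + 1)) + c2 * (T1 powr (q - 2 + 1) / - (q - 2 + 1))"
      using powr_int \<open>c1 \<ge> 0\<close> \<open>c2 \<ge> 0\<close> by (intro add_mono mult_left_mono) auto
    finally show ?thesis by simp
  qed
  then show ?thesis unfolding \<phi>_def by blast
qed

lemma weighted_kinetic_feedback:
  assumes "large_time T1"
  shows "\<exists>A. \<forall>T\<ge>T1. \<alpha> / 2 * integral {T1..T} (\<lambda>s. s * (norm (x' s))\<^sup>2)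
      \<le> A + (q + 1) / \<alpha> * T powr (2 * q - 1) * (T * (norm (x' T))\<^sup>2)"
proof -
  obtain C where C: "\<And>T. T \<ge> T1 \<Longrightarrow> lyap T - lyap T1 \<le> C - \<alpha> / 2 * integral {T1..T} (\<lambda>s. s * (norm (x' s))\<^sup>2)"
    using lyap_decrease[OF assms] by blast
  have "- ((q + 1) / \<alpha> * T powr (2 * q - 1) * (T * (norm (x' T))\<^sup>2)) \<le> lyap T" if "T \<ge> T1" for T
  proof -
    have "T > 0" using large_timeD(1)[OF assms that] t0 by simp
    then have "T powr (2 * q) * (norm (x' T))\<^sup>2 = T powr (2 * q - 1) * (T * (norm (x' T))\<^sup>2)"
      by (simp add: powr_diff field_simps)
    with lyap_ge[OF large_timeD(1,4)[OF assms that]] show ?thesis by (simp only: mult.assoc)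
  qed
  then show ?thesis using C by (intro exI[of _ "C + lyap T1"]) (smt (verit))
qed

lemma weighted_kinetic_integrable: "(\<lambda>s. s * (norm (x' s))\<^sup>2) integrable_on {t0..}"
proof -
  define \<phi> where "\<phi> s = s * (norm (x' s))\<^sup>2" for s
  obtain T1 where "large_time T1" by (rule ex_large_time)
  then have "t0 \<le> T1" "T1 > 0" using t0 by (auto simp: large_time_def)
  obtain A where feedback: "\<And>T. T \<ge> T1 \<Longrightarrow> \<alpha> / 2 * integral {T1..T} \<phi> \<le> A + (q + 1) / \<alpha> * T powr (2 * q - 1) * \<phi> T"
    using weighted_kinetic_feedback[OF \<open>large_time T1\<close>] unfolding \<phi>_def by blast
  have \<phi>_cont: "continuous_on {t0..} \<phi>" unfolding \<phi>_def[abs_def] by (intro continuous_intros x'_cont)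
  have \<phi>_int: "\<phi> integrable_on {a..b}" if "t0 \<le> a" for a b
    by (rule integrable_continuous_interval, rule continuous_on_subset[OF \<phi>_cont]) (use that in auto)
  have \<phi>_nonneg: "\<phi> t \<ge> 0" if "t \<ge> t0" for t using that t0 by (simp add: \<phi>_def)
  have "\<exists>B. \<forall>T\<ge>T1. integral {T1..T} \<phi> \<le> B"
  proof (rule integral_bounded_if_feedback_inequality[OF \<open>T1 > 0\<close> q q_lt_1 _ _ _ _ feedback])
    show "\<alpha> / 2 > 0" "(q + 1) / \<alpha> > 0" using \<alpha> q by auto
    show "continuous_on {T1..} \<phi>" by (rule continuous_on_subset[OF \<phi>_cont]) (use \<open>t0 \<le> T1\<close> in auto)
    show "\<phi> t \<ge> 0" if "t \<ge> T1" for t using \<phi>_nonneg that \<open>t0 \<le> T1\<close> by simp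
    show "integral {T1..T} \<phi> \<le> (energy T1 - energy_inf) / \<alpha> * T powr (1 + q)" if "T \<ge> T1" for T
      unfolding \<phi>_def by (rule weighted_kinetic_integral_le_powr[OF \<open>t0 \<le> T1\<close> that])
  qed
  then obtain B where B: "\<And>T. T \<ge> T1 \<Longrightarrow> integral {T1..T} \<phi> \<le> B" by blast
  have "\<phi> integrable_on {t0..}"
  proof (rule integrable_on_Ici_if_nonneg_bounded)
    fix y assume "y \<ge> t0"
    show "\<phi> integrable_on {t0..y}" "\<phi> y \<ge> 0" using \<phi>_int \<phi>_nonneg \<open>y \<ge> t0\<close> by auto
    have "integral {t0..y} \<phi> \<le> integral {t0..max y T1} \<phi>"
      using \<phi>_nonneg \<open>y \<ge> t0\<close> by (intro integral_mono_upper_limit \<phi>_int) auto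
    also have "\<dots> = integral {t0..T1} \<phi> + integral {T1..max y T1} \<phi>"
      using integral_diff_initial_segments[OF \<phi>_int[of t0 "max y T1"], of T1 "max y T1"] \<open>t0 \<le> T1\<close> by simp
    also have "\<dots> \<le> integral {t0..T1} \<phi> + B" using B[of "max y T1"] by simp
    finally show "integral {t0..y} \<phi> \<le> integral {t0..T1} \<phi> + B" .
  qed
  then show ?thesis by (simp add: \<phi>_def[abs_def])
qed

lemma weighted_kinetic_integrable_powr:
  assumes "e \<le> 1"
  shows "(\<lambda>s. s powr e * (norm (x' s))\<^sup>2) integrable_on {t0..}"
proof (rule measurable_bounded_by_integrable_imp_integrable)
  show "(\<lambda>s. s powr e * (norm (x' s))\<^sup>2) \<in> borel_measurable (lebesgue_on {t0..})"
    using t0 by (intro continuous_imp_measurable_on_sets_lebesgue continuous_intros x'_cont) auto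
  show "(\<lambda>s. t0 powr (e - 1) * (s * (norm (x' s))\<^sup>2)) integrable_on {t0..}"
    by (rule integrable_on_mult_right[OF weighted_kinetic_integrable])
  fix s assume "s \<in> {t0..}"
  then have "s > 0" using t0 by simp
  have "s powr e = s powr (e - 1) * s" using \<open>s > 0\<close> by (simp add: powr_diff)
  also have "\<dots> \<le> t0 powr (e - 1) * s"
    using assms \<open>s \<in> {t0..}\<close> \<open>s > 0\<close> t0 by (intro mult_right_mono powr_mono2') auto
  finally show "norm (s powr e * (norm (x' s))\<^sup>2) \<le> t0 powr (e - 1) * (s * (norm (x' s))\<^sup>2)"
    by (simp add: mult_right_mono mult.assoc[symmetric])
qed simp

end

theorem mainTheorem16:
  fixes f :: "'m::finite \<Rightarrow> 'a::{real_inner,complete_space} \<Rightarrow> real"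
    and df :: "'m \<Rightarrow> 'a \<Rightarrow> 'a"
    and t0 \<alpha> \<beta> q p :: real
    and x0 v0 :: 'a
    and x x' x'' :: "real \<Rightarrow> 'a"
  assumes grad: "\<And>i z. (f i has_derivative (\<lambda>h. df i z \<bullet> h)) (at z)"
    and conv: "\<And>i. convex_on UNIV (f i)"
    and lip: "\<And>i. \<exists>L. L-lipschitz_on UNIV (df i)"
    and t0: "t0 > 0" and \<alpha>: "\<alpha> > 0" and \<beta>: "\<beta> > 0"
    and q: "0 < q" "q \<le> 1" and p: "0 < p" "p < 2" and qp: "q + 1 < p"
    \<comment> \<open>(A3)\<close>
    and A3a: "\<And>z. z \<in> levelset f (Fvec f x0 + (\<chi> i. \<beta> / (2 * t0 powr p) * (norm x0)\<^sup>2
                                                   + 1/2 * (norm v0)\<^sup>2))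
               \<Longrightarrow> LPw f (Fvec f z) \<noteq> {}"
    and A3b: "\<exists>R. \<forall>Fs \<in> Fvec f ` LPw f (Fvec f x0 + (\<chi> i. \<beta> / (2 * t0 powr p) * (norm x0)\<^sup>2
                                                   + 1/2 * (norm v0)\<^sup>2)).
                 (INF z\<in>{z. Fvec f z = Fs}. norm z) \<le> R"
    \<comment> \<open>(A4)\<close>
    and A4a: "\<And>w. Sset f w \<noteq> {}"
    and A4b: "continuous_on UNIV (\<lambda>w. hproj (Sset f w) 0)"
    \<comment> \<open>x is a trajectory solution of (MTRIGS)\<close>
    and xder: "\<And>t. t \<ge> t0 \<Longrightarrow> (x has_vector_derivative x' t) (at t within {t0..})"
    and x'cont: "continuous_on {t0..} x'"
    and x''int: "\<And>T. T \<ge> t0 \<Longrightarrow> x'' integrable_on {t0..T}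
                      \<and> (\<lambda>s. norm (x'' s)) integrable_on {t0..T}"
    and x'rep: "\<And>t. t \<ge> t0 \<Longrightarrow> (x'' has_integral (x' t - x' t0)) {t0..t}"
    and eq: "AE t in lebesgue. t \<ge> t0 \<longrightarrow>
               (\<alpha> / t powr q) *\<^sub>R x' t
                 + hproj ((\<lambda>g. g + (\<beta> / t powr p) *\<^sub>R x t + x'' t) ` Cset df (x t)) 0 = 0"
    and init: "x t0 = x0" "x' t0 = v0"
    and r: "q \<le> r" "r \<le> (q + 1) / 2"
  shows "(\<lambda>s. s powr (2 * r - q) * (norm (x' s))\<^sup>2) integrable_on {t0..}"
proof -
  interpret mtrigs_trajectory f df t0 \<alpha> \<beta> q p x0 v0 x x' x''
    by (rule mtrigs_trajectory.intro)
      (fact grad conv lip t0 \<alpha> \<beta> q(1) p(2) qp A3a A3b A4a xder x'cont x'rep eq init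
        | use x''int in blast)+
  have "2 * r - q \<le> 1" using r by simp
  then show ?thesis by (rule weighted_kinetic_integrable_powr)
qed

end
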